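(* Let $q$ be a self-join-free Boolean conjunctive query. Let $Z\to w$ be a functional dependency that is internal to $q$. Let $\vec z$ be a sequence of distinct variables with set of variables equal to $Z$, and let $q'=q\cup\{N^{\mathsf{c}}(\underline{\vec z},w)\}$ where $N$ is a fresh relation name of mode $\mathsf{c}$ whose primary key consists of the positions of $\vec z$. Then (1) there exists a first-order reduction from $\mathsf{CERTAINTY}(q)$ to $\mathsf{CERTAINTY}(q')$; and (2) if the attack graph of $q$ contains no strong cycle, then the attack graph of $q'$ contains no strong cycle.
   Context: Every relation name has a signature $[n,k]$ ($1\le k\le n$; primary-key positions $1,\dots,k$) and a mode in $\{\mathsf{c},\mathsf{i}\}$. For an atom $F$, $\mathrm{key}(F)$ = variables at primary-key positions, $\mathrm{vars}(F)$ = all its variables. Facts are variable-free atoms; key-equal facts share relation name and primary-key values. A database is a finite set of facts with no two distinct key-equal facts of mode $\mathsf{c}$; a repair is a maximal subset without two distinct key-equal facts. A self-join-free Boolean conjunctive query is a finite set of atoms with distinct relation names (existentially closed conjunction). $\mathsf{CERTAINTY}(q)$: does every repair of the input database satisfy $q$? A first-order reduction is a mapping of databases defined by first-order queries preserving yes/no answers. $\mathcal{K}(p)=\{\mathrm{key}(F)\to\mathrm{vars}(F)\mid F\in p\}$; $q^{\mathsf{c}}$ = atoms of mode $\mathsf{c}$; $F^{+,q}$ = variables $x$ with $\mathcal{K}(q\setminus\{F\})\cup\mathcal{K}(q^{\mathsf{c}})\models\mathrm{key}(F)\to x$. $F$ attacks $G$ ($F\ne G$) iff there are atoms $F_0=F,\dots,F_\ell=G$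 of $q$ and variables $x_i\in(\mathrm{vars}(F_{i-1})\cap\mathrm{vars}(F_i))\setminus F^{+,q}$. An attack is weak if $\mathcal{K}(q)\models\mathrm{key}(F)\to\mathrm{key}(G)$, else strong; a cycle is strong if it contains a strong attack. $F$ attacks a variable $x$ if $F$ attacks $N'(x)$ in $q\cup\{N'(x)\}$ for a fresh $N'$ of signature $[1,1]$. A sequential proof for $\mathcal{K}(q)\models Z\to w$ is a sequence $F_1,\dots,F_\ell$ of atoms of $q$ with $\mathrm{key}(F_i)\subseteq Z\cup\bigcup_{j<i}\mathrm{vars}(F_j)$ and $w\in\mathrm{vars}(F_k)$ for some $k$. $Z\to w$ is internal to $q$ if (i) some sequential proof for $\mathcal{K}(q)\models Z\to w$ contains no atom attacking a variable of $Z\cup\{w\}$, and (ii) $Z\subseteq\mathrm{vars}(F)$ for some $F\in q$. *)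

theory Defs
  imports Main
begin

datatype mode = ModeC | ModeI

text \<open>A schema assigns to every relation name its arity n, the length k of its
  primary key (positions 1..k) and its mode.\<close>
record 'r schema =
  arity  :: "'r \<Rightarrow> nat"
  keylen :: "'r \<Rightarrow> nat"
  rmode  :: "'r \<Rightarrow> mode"

definition wf_schema :: "'r schema \<Rightarrow> bool" where
  "wf_schema S \<longleftrightarrow> (\<forall>R. 1 \<le> keylen S R \<and> keylen S R \<le> arity S R)"

datatype ('v, 'c) qterm = Var 'v | Cst 'c

type_synonym ('r, 'v, 'c) atom = "'r \<times> ('v, 'c) qterm list"
type_synonym ('r, 'c) fact = "'r \<times> 'c list"

definition vars :: "('r, 'v, 'c) atom \<Rightarrow> 'v set" where
  "vars F = {x. Var x \<in> set (snd F)}"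

definition key :: "'r schema \<Rightarrow> ('r, 'v, 'c) atom \<Rightarrow> 'v set" where
  "key S F = {x. Var x \<in> set (take (keylen S (fst F)) (snd F))}"

definition sjf_query :: "'r schema \<Rightarrow> ('r, 'v, 'c) atom set \<Rightarrow> bool" where
  "sjf_query S q \<longleftrightarrow> finite q \<and> (\<forall>F\<in>q. length (snd F) = arity S (fst F)) \<and> inj_on fst q"

definition key_equal :: "'r schema \<Rightarrow> ('r, 'c) fact \<Rightarrow> ('r, 'c) fact \<Rightarrow> bool" where
  "key_equal S A B \<longleftrightarrow> fst A = fst B \<and>
      take (keylen S (fst A)) (snd A) = take (keylen S (fst B)) (snd B)"

definition consistent :: "'r schema \<Rightarrow> ('r, 'c) fact set \<Rightarrow> bool" where
  "consistent S r \<longleftrightarrow> (\<forall>A\<in>r. \<forall>B\<in>r. key_equal S A B \<longrightarrow> A = B)"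

definition is_db :: "'r schema \<Rightarrow> ('r, 'c) fact set \<Rightarrow> bool" where
  "is_db S db \<longleftrightarrow> finite db \<and> (\<forall>A\<in>db. length (snd A) = arity S (fst A)) \<and>
      (\<forall>A\<in>db. \<forall>B\<in>db. rmode S (fst A) = ModeC \<and> key_equal S A B \<longrightarrow> A = B)"

definition is_repair :: "'r schema \<Rightarrow> ('r, 'c) fact set \<Rightarrow> ('r, 'c) fact set \<Rightarrow> bool" where
  "is_repair S db r \<longleftrightarrow> r \<subseteq> db \<and> consistent S r \<and>
      (\<forall>r'. r \<subseteq> r' \<and> r' \<subseteq> db \<and> consistent S r' \<longrightarrow> r' = r)"

fun inst :: "('v \<Rightarrow> 'c) \<Rightarrow> ('v, 'c) qterm \<Rightarrow> 'c" where
  "inst \<theta> (Var x) = \<theta> x"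
| "inst \<theta> (Cst c) = c"

definition satisfies :: "('r, 'c) fact set \<Rightarrow> ('r, 'v, 'c) atom set \<Rightarrow> bool" where
  "satisfies r q \<longleftrightarrow> (\<exists>\<theta>. \<forall>F\<in>q. (fst F, map (inst \<theta>) (snd F)) \<in> r)"

definition certainty :: "'r schema \<Rightarrow> ('r, 'v, 'c) atom set \<Rightarrow> ('r, 'c) fact set set" where
  "certainty S q = {db. is_db S db \<and> (\<forall>r. is_repair S db r \<longrightarrow> satisfies r q)}"

datatype 'c fterm = FVar nat | FConst 'c

datatype ('r, 'c) fo =
    FAtom 'r "'c fterm list"
  | FEq "'c fterm" "'c fterm"
  | FNot "('r, 'c) fo"
  | FAnd "('r, 'c) fo" "('r, 'c) fo"
  | FEx nat "('r, 'c) fo"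

fun fterm_val :: "(nat \<Rightarrow> 'c) \<Rightarrow> 'c fterm \<Rightarrow> 'c" where
  "fterm_val \<sigma> (FVar i) = \<sigma> i"
| "fterm_val \<sigma> (FConst c) = c"

fun fterm_consts :: "'c fterm \<Rightarrow> 'c set" where
  "fterm_consts (FVar i) = {}"
| "fterm_consts (FConst c) = {c}"

fun fterm_fv :: "'c fterm \<Rightarrow> nat set" where
  "fterm_fv (FVar i) = {i}"
| "fterm_fv (FConst c) = {}"

fun fo_consts :: "('r, 'c) fo \<Rightarrow> 'c set" where
  "fo_consts (FAtom R ts) = (\<Union>t\<in>set ts. fterm_consts t)"
| "fo_consts (FEq s t) = fterm_consts s \<union> fterm_consts t"
| "fo_consts (FNot \<phi>) = fo_consts \<phi>"
| "fo_consts (FAnd \<phi> \<psi>) = fo_consts \<phi> \<union> fo_consts \<psi>"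
| "fo_consts (FEx x \<phi>) = fo_consts \<phi>"

fun fo_fv :: "('r, 'c) fo \<Rightarrow> nat set" where
  "fo_fv (FAtom R ts) = (\<Union>t\<in>set ts. fterm_fv t)"
| "fo_fv (FEq s t) = fterm_fv s \<union> fterm_fv t"
| "fo_fv (FNot \<phi>) = fo_fv \<phi>"
| "fo_fv (FAnd \<phi> \<psi>) = fo_fv \<phi> \<union> fo_fv \<psi>"
| "fo_fv (FEx x \<phi>) = fo_fv \<phi> - {x}"

text \<open>Active-domain semantics: quantifiers range over the domain D.\<close>
fun fo_eval :: "'c set \<Rightarrow> ('r, 'c) fact set \<Rightarrow> (nat \<Rightarrow> 'c) \<Rightarrow> ('r, 'c) fo \<Rightarrow> bool" where
  "fo_eval D db \<sigma> (FAtom R ts) = ((R, map (fterm_val \<sigma>) ts) \<in> db)"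
| "fo_eval D db \<sigma> (FEq s t) = (fterm_val \<sigma> s = fterm_val \<sigma> t)"
| "fo_eval D db \<sigma> (FNot \<phi>) = (\<not> fo_eval D db \<sigma> \<phi>)"
| "fo_eval D db \<sigma> (FAnd \<phi> \<psi>) = (fo_eval D db \<sigma> \<phi> \<and> fo_eval D db \<sigma> \<psi>)"
| "fo_eval D db \<sigma> (FEx x \<phi>) = (\<exists>a\<in>D. fo_eval D db (\<sigma>(x := a)) \<phi>)"

definition adom :: "('r, 'c) fact set \<Rightarrow> 'c set" where
  "adom db = (\<Union>A\<in>db. set (snd A))"

text \<open>The database mapping defined by a finite family of first-order queries:
  for each output relation name R in T, the R-facts of the output are the tuples
  (of length arity R) satisfying the query \<Phi> R, whose free variables are
  0,...,arity R - 1 (variable i gives position i).\<close>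
definition fo_map :: "'r schema \<Rightarrow> 'r set \<Rightarrow> ('r \<Rightarrow> ('r, 'c) fo) \<Rightarrow> ('r, 'c) fact set \<Rightarrow> ('r, 'c) fact set" where
  "fo_map S T \<Phi> db = {(R, as). R \<in> T \<and> length as = arity S R \<and>
      set as \<subseteq> adom db \<union> fo_consts (\<Phi> R) \<and>
      fo_eval (adom db \<union> fo_consts (\<Phi> R)) db (\<lambda>i. as ! i) (\<Phi> R)}"

definition fo_reduction :: "'r schema \<Rightarrow> ('r, 'c) fact set set \<Rightarrow> ('r, 'c) fact set set \<Rightarrow> bool" where
  "fo_reduction S P P' \<longleftrightarrow> (\<exists>T \<Phi>. finite T \<and> (\<forall>R\<in>T. fo_fv (\<Phi> R) \<subseteq> {..<arity S R}) \<and>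
      (\<forall>db. is_db S db \<longrightarrow> is_db S (fo_map S T \<Phi> db) \<and>
                           (db \<in> P \<longleftrightarrow> fo_map S T \<Phi> db \<in> P')))"

inductive_set fd_closure :: "('v set \<times> 'v set) set \<Rightarrow> 'v set \<Rightarrow> 'v set"
  for \<Sigma> :: "('v set \<times> 'v set) set" and X :: "'v set" where
  base: "x \<in> X \<Longrightarrow> x \<in> fd_closure \<Sigma> X"
| step: "(L, R) \<in> \<Sigma> \<Longrightarrow> (\<forall>l\<in>L. l \<in> fd_closure \<Sigma> X) \<Longrightarrow> y \<in> R \<Longrightarrow> y \<in> fd_closure \<Sigma> X"

definition fd_entails :: "('v set \<times> 'v set) set \<Rightarrow> 'v set \<Rightarrow> 'v \<Rightarrow> bool" where
  "fd_entails \<Sigma> X y \<longleftrightarrow> y \<in> fd_closure \<Sigma> X"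

definition Kfd :: "'r schema \<Rightarrow> ('r, 'v, 'c) atom set \<Rightarrow> ('v set \<times> 'v set) set" where
  "Kfd S p = {(key S F, vars F) | F. F \<in> p}"

definition cpart :: "'r schema \<Rightarrow> ('r, 'v, 'c) atom set \<Rightarrow> ('r, 'v, 'c) atom set" where
  "cpart S q = {F \<in> q. rmode S (fst F) = ModeC}"

definition Fplus :: "'r schema \<Rightarrow> ('r, 'v, 'c) atom set \<Rightarrow> ('r, 'v, 'c) atom \<Rightarrow> 'v set" where
  "Fplus S q F = {x. fd_entails (Kfd S (q - {F}) \<union> Kfd S (cpart S q)) (key S F) x}"

definition att_step :: "'r schema \<Rightarrow> ('r, 'v, 'c) atom set \<Rightarrow> ('r, 'v, 'c) atom
    \<Rightarrow> (('r, 'v, 'c) atom \<times> ('r, 'v, 'c) atom) set" where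
  "att_step S q F = {(A, B). A \<in> q \<and> B \<in> q \<and> (\<exists>x. x \<in> vars A \<inter> vars B \<and> x \<notin> Fplus S q F)}"

definition attacks :: "'r schema \<Rightarrow> ('r, 'v, 'c) atom set \<Rightarrow> ('r, 'v, 'c) atom \<Rightarrow> ('r, 'v, 'c) atom \<Rightarrow> bool" where
  "attacks S q F G \<longleftrightarrow> F \<in> q \<and> G \<in> q \<and> F \<noteq> G \<and> (F, G) \<in> (att_step S q F)\<^sup>+"

definition weak_attack :: "'r schema \<Rightarrow> ('r, 'v, 'c) atom set \<Rightarrow> ('r, 'v, 'c) atom \<Rightarrow> ('r, 'v, 'c) atom \<Rightarrow> bool" where
  "weak_attack S q F G \<longleftrightarrow> attacks S q F G \<and> (\<forall>y\<in>key S G. fd_entails (Kfd S q) (key S F) y)"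

definition strong_attack :: "'r schema \<Rightarrow> ('r, 'v, 'c) atom set \<Rightarrow> ('r, 'v, 'c) atom \<Rightarrow> ('r, 'v, 'c) atom \<Rightarrow> bool" where
  "strong_attack S q F G \<longleftrightarrow> attacks S q F G \<and> \<not> (\<forall>y\<in>key S G. fd_entails (Kfd S q) (key S F) y)"

definition has_strong_cycle :: "'r schema \<Rightarrow> ('r, 'v, 'c) atom set \<Rightarrow> bool" where
  "has_strong_cycle S q \<longleftrightarrow> (\<exists>Fs. Fs \<noteq> [] \<and> distinct Fs \<and>
     (\<forall>i<length Fs. attacks S q (Fs ! i) (Fs ! (Suc i mod length Fs))) \<and>
     (\<exists>i<length Fs. strong_attack S q (Fs ! i) (Fs ! (Suc i mod length Fs))))"

text \<open>F attacks the variable x: F attacks N'(x) in q \<union> {N'(x)} for a fresh N' of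
  signature [1,1].  Unfolded: adding N'(x) only adds the trivial dependency
  {x} \<rightarrow> {x}, so F^{+} is unchanged, and a witnessing sequence ends with an
  atom of q containing x (x not in F^{+}) followed by N'(x).\<close>
definition attacks_var :: "'r schema \<Rightarrow> ('r, 'v, 'c) atom set \<Rightarrow> ('r, 'v, 'c) atom \<Rightarrow> 'v \<Rightarrow> bool" where
  "attacks_var S q F x \<longleftrightarrow> F \<in> q \<and> x \<notin> Fplus S q F \<and>
     (\<exists>G\<in>q. x \<in> vars G \<and> (F, G) \<in> (att_step S q F)\<^sup>*)"

definition seq_proof :: "'r schema \<Rightarrow> ('r, 'v, 'c) atom set \<Rightarrow> 'v set \<Rightarrow> 'v \<Rightarrow> ('r, 'v, 'c) atom list \<Rightarrow> bool" where
  "seq_proof S q Z w Fs \<longleftrightarrow> set Fs \<subseteq> q \<and>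
     (\<forall>i<length Fs. key S (Fs ! i) \<subseteq> Z \<union> (\<Union>j<i. vars (Fs ! j))) \<and>
     (\<exists>k<length Fs. w \<in> vars (Fs ! k))"

definition internal_fd :: "'r schema \<Rightarrow> ('r, 'v, 'c) atom set \<Rightarrow> 'v set \<Rightarrow> 'v \<Rightarrow> bool" where
  "internal_fd S q Z w \<longleftrightarrow>
     (\<exists>Fs. seq_proof S q Z w Fs \<and> (\<forall>F\<in>set Fs. \<forall>x\<in>insert w Z. \<not> attacks_var S q F x)) \<and>
     (\<exists>F\<in>q. Z \<subseteq> vars F)"

end

theory Submission
  imports Defs
begin

(* Let Fs be a sequential proof of Z \<rightarrow> w none of whose atoms attacks a variable of Z \<union> {w}.
   The reduction keeps the q-facts of a database and adds N(c, d) when the embeddings of Fs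
   sending zs to c exist and all send w to d; this is first-order definable.
   If a repair r' of the new database falsifies q', extend its q-facts to a repair r of the old
   one. Every embedding \<theta> of q into r misses the N-fact of its values, so some embedding \<mu> of Fs
   agrees with \<theta> on Z but not on w. Replacing, atom by atom along Fs, the image under \<theta> by the
   image under \<mu> keeps a repair, creates no new values of (zs, w) because these atoms attack no
   variable of Z \<union> {w}, and eventually removes the values of \<theta>. Iterating yields a repair of the
   old database that falsifies q.
   In the attack graph of q', N has mode c and attacks nothing, and an attack path through N
   enters and leaves it by variables of Z \<union> {w}. Outside F\<^sup>+ such variables only occur in atoms
   connected to an atom containing Z, so the path can be rerouted inside q. *)

definition inst_atom :: "('v \<Rightarrow> 'c) \<Rightarrow> ('r, 'v, 'c) atom \<Rightarrow> ('r, 'c) fact" where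
  "inst_atom \<theta> F = (fst F, map (inst \<theta>) (snd F))"

definition embeds :: "('r, 'c) fact set \<Rightarrow> ('r, 'v, 'c) atom set \<Rightarrow> ('v \<Rightarrow> 'c) \<Rightarrow> bool" where
  "embeds r p \<theta> \<longleftrightarrow> (\<forall>F\<in>p. inst_atom \<theta> F \<in> r)"

definition answers :: "('r, 'c) fact set \<Rightarrow> ('r, 'v, 'c) atom set \<Rightarrow> 'v list \<Rightarrow> 'c list set" where
  "answers r p xs = {map \<theta> xs | \<theta>. embeds r p \<theta>}"

lemma satisfies_iff_embeds: "satisfies r p \<longleftrightarrow> (\<exists>\<theta>. embeds r p \<theta>)"
  by (simp add: satisfies_def embeds_def inst_atom_def)

lemma embeds_insert [simp]: "embeds r (insert F p) \<theta> \<longleftrightarrow> inst_atom \<theta> F \<in> r \<and> embeds r p \<theta>"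
  by (simp add: embeds_def)

lemma embeds_mono: "embeds r p \<theta> \<Longrightarrow> r \<subseteq> r' \<Longrightarrow> p' \<subseteq> p \<Longrightarrow> embeds r' p' \<theta>"
  by (auto simp: embeds_def)

lemma fst_inst_atom [simp]: "fst (inst_atom \<theta> F) = fst F"
  by (simp add: inst_atom_def)

lemma inst_atom_cong: "(\<And>x. x \<in> vars F \<Longrightarrow> \<theta> x = \<mu> x) \<Longrightarrow> inst_atom \<theta> F = inst_atom \<mu> F"
proof -
  assume agree: "\<And>x. x \<in> vars F \<Longrightarrow> \<theta> x = \<mu> x"
  have "inst \<theta> t = inst \<mu> t" if "t \<in> set (snd F)" for t
  proof (cases t)
    case (Var x)
    then show ?thesis using that agree by (simp add: vars_def)
  qed simp
  then show ?thesis by (simp add: inst_atom_def)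
qed

lemma embeds_cong:
  "(\<And>x. x \<in> \<Union> (vars ` p) \<Longrightarrow> \<theta> x = \<mu> x) \<Longrightarrow> embeds r p \<theta> \<longleftrightarrow> embeds r p \<mu>"
  unfolding embeds_def using inst_atom_cong by (metis UN_I)

lemma inst_atom_eqD: "inst_atom \<theta> F = inst_atom \<mu> F \<Longrightarrow> x \<in> vars F \<Longrightarrow> \<theta> x = \<mu> x"
  by (auto simp: inst_atom_def vars_def dest!: bspec)

lemma key_equal_inst_atom:
  "(\<And>x. x \<in> key S F \<Longrightarrow> \<theta> x = \<mu> x) \<Longrightarrow> key_equal S (inst_atom \<theta> F) (inst_atom \<mu> F)"
  unfolding inst_atom_def key_equal_def key_def
  by (simp add: take_map) (metis inst.simps qterm.exhaust)

lemma key_equal_inst_atomD: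
  "key_equal S (inst_atom \<theta> F) (inst_atom \<mu> F) \<Longrightarrow> x \<in> key S F \<Longrightarrow> \<theta> x = \<mu> x"
  by (auto simp: inst_atom_def key_equal_def key_def take_map dest!: bspec)

lemma key_subset_vars: "key S F \<subseteq> vars F"
  by (auto simp: key_def vars_def dest: in_set_takeD)

lemma finite_vars: "finite (vars F)"
proof -
  have "vars F = Var -` set (snd F)"
    by (auto simp: vars_def)
  then show ?thesis
    by (simp add: finite_vimageI inj_def)
qed

lemma finite_adom: "finite db \<Longrightarrow> finite (adom db)"
  by (simp add: adom_def)

lemma inst_atom_in_adom: "inst_atom \<theta> F \<in> db \<Longrightarrow> x \<in> vars F \<Longrightarrow> \<theta> x \<in> adom db"
  unfolding adom_def inst_atom_def vars_def by force

lemma embeds_in_adom: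
  assumes "embeds r p \<theta>" and "x \<in> \<Union> (vars ` p)"
  shows "\<theta> x \<in> adom r"
  using assms inst_atom_in_adom by (fastforce simp: embeds_def)

lemma finite_answers:
  assumes "finite r" and "set xs \<subseteq> \<Union> (vars ` p)"
  shows "finite (answers r p xs)"
proof (rule finite_subset)
  show "answers r p xs \<subseteq> {cs. set cs \<subseteq> adom r \<and> length cs = length xs}"
    using assms(2) embeds_in_adom by (fastforce simp: answers_def)
  show "finite {cs. set cs \<subseteq> adom r \<and> length cs = length xs}"
    using assms(1) by (simp add: finite_adom finite_lists_length_eq)
qed

lemma key_equal_refl: "key_equal S A A"
  by (simp add: key_equal_def)

lemma key_equal_sym: "key_equal S A B \<Longrightarrow> key_equal S B A"
  by (auto simp: key_equal_def)

lemma key_equal_trans: "key_equal S A B \<Longrightarrow> key_equal S B C \<Longrightarrow> key_equal S A C"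
  by (auto simp: key_equal_def)

lemma is_repair_iff:
  "is_repair S db r \<longleftrightarrow> r \<subseteq> db \<and> consistent S r \<and> (\<forall>A\<in>db. \<exists>B\<in>r. key_equal S A B)"
proof
  assume r: "is_repair S db r"
  then have sub: "r \<subseteq> db" and cons: "consistent S r"
    by (simp_all add: is_repair_def)
  have "\<exists>B\<in>r. key_equal S A B" if A: "A \<in> db" for A
  proof (cases "A \<in> r")
    case True
    then show ?thesis using key_equal_refl by blast
  next
    case False
    have "\<not> consistent S (insert A r)"
    proof
      assume "consistent S (insert A r)"
      then have "insert A r = r"
        using r A sub unfolding is_repair_def by blast
      then show False
        using False by blast
    qed
    then obtain a b where ab: "a \<in> insert A r" "b \<in> insert A r" "key_equal S a b" "a \<noteq> b"
      unfolding consistent_def by blast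
    with cons have "a = A \<and> b \<in> r \<or> b = A \<and> a \<in> r"
      unfolding consistent_def by blast
    then show ?thesis
      using ab(3) key_equal_sym by blast
  qed
  with sub cons show "r \<subseteq> db \<and> consistent S r \<and> (\<forall>A\<in>db. \<exists>B\<in>r. key_equal S A B)"
    by blast
next
  assume r: "r \<subseteq> db \<and> consistent S r \<and> (\<forall>A\<in>db. \<exists>B\<in>r. key_equal S A B)"
  have "r' = r" if larger: "r \<subseteq> r'" "r' \<subseteq> db" "consistent S r'" for r'
  proof
    show "r' \<subseteq> r"
    proof
      fix A assume "A \<in> r'"
      moreover obtain B where "B \<in> r" "key_equal S A B"
        using r larger(2) \<open>A \<in> r'\<close> by blast
      ultimately show "A \<in> r"
        using larger unfolding consistent_def by blast
    qed
  qed (rule larger(1))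
  with r show "is_repair S db r"
    unfolding is_repair_def by blast
qed

lemma repair_subset: "is_repair S db r \<Longrightarrow> r \<subseteq> db"
  by (simp add: is_repair_def)

lemma repair_consistent: "is_repair S db r \<Longrightarrow> consistent S r"
  by (simp add: is_repair_def)

lemma repair_blocks: "is_repair S db r \<Longrightarrow> A \<in> db \<Longrightarrow> \<exists>B\<in>r. key_equal S A B"
  by (simp add: is_repair_iff)

lemma is_repair_swap:
  assumes r: "is_repair S db r" and A: "A \<in> r" and A': "A' \<in> db" "key_equal S A A'"
  shows "is_repair S db (insert A' (r - {A}))"
  unfolding is_repair_iff
proof (intro conjI ballI)
  have cons: "consistent S r" and blocks: "\<forall>B\<in>db. \<exists>C\<in>r. key_equal S B C"
    using r by (auto simp: is_repair_iff)
  have "B = A" if "B \<in> r" "key_equal S A' B" for B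
    using cons A that(1) key_equal_trans[OF A'(2) that(2)] unfolding consistent_def by blast
  then show "consistent S (insert A' (r - {A}))"
    using cons key_equal_sym unfolding consistent_def by blast
  show "insert A' (r - {A}) \<subseteq> db"
    using r A' by (auto simp: is_repair_def)
  fix B assume "B \<in> db"
  then obtain C where "C \<in> r" "key_equal S B C"
    using blocks by blast
  then show "\<exists>C\<in>insert A' (r - {A}). key_equal S B C"
    using key_equal_trans[OF _ A'(2)] by (cases "C = A") auto
qed

lemma consistent_extends_to_repair:
  assumes db: "finite db" and r0: "r0 \<subseteq> db" "consistent S r0"
  obtains r where "r0 \<subseteq> r" "is_repair S db r"
proof -
  define P where "P r \<longleftrightarrow> r0 \<subseteq> r \<and> r \<subseteq> db \<and> consistent S r" for r
  have "card r < Suc (card db)" if "P r" for r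
    using that db by (simp add: P_def card_mono le_imp_less_Suc)
  then obtain r where r: "P r" and max: "\<And>r'. P r' \<Longrightarrow> card r' \<le> card r"
    using ex_has_greatest_nat[of P r0 card "Suc (card db)"] r0 by (auto simp: P_def)
  have "r' = r" if "r \<subseteq> r'" "r' \<subseteq> db" "consistent S r'" for r'
  proof -
    have "P r'"
      using that r by (auto simp: P_def)
    then show ?thesis
      using card_seteq[of r' r] finite_subset[OF that(2) db] that(1) max by simp
  qed
  then have "is_repair S db r"
    using r by (auto simp: P_def is_repair_def)
  then show thesis
    using r that unfolding P_def by blast
qed

section \<open>Functional dependencies and the attack graph\<close>

lemma fd_closure_mono: "x \<in> fd_closure \<Sigma> X \<Longrightarrow> \<Sigma> \<subseteq> \<Sigma>' \<Longrightarrow> x \<in> fd_closure \<Sigma>' X"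
  by (induction rule: fd_closure.induct) (auto intro: fd_closure.base fd_closure.step)

lemma Fplus_mono: "q \<subseteq> q' \<Longrightarrow> Fplus S q F \<subseteq> Fplus S q' F"
proof -
  assume "q \<subseteq> q'"
  then have "Kfd S (q - {F}) \<union> Kfd S (cpart S q) \<subseteq> Kfd S (q' - {F}) \<union> Kfd S (cpart S q')"
    unfolding Kfd_def cpart_def by blast
  then show ?thesis
    by (auto simp: Fplus_def fd_entails_def intro: fd_closure_mono)
qed

lemma key_subset_Fplus: "key S F \<subseteq> Fplus S q F"
  by (auto simp: Fplus_def fd_entails_def intro: fd_closure.base)

lemma vars_subset_Fplus:
  assumes "G \<in> q" and "G \<noteq> F \<or> rmode S (fst G) = ModeC" and "key S G \<subseteq> Fplus S q F"
  shows "vars G \<subseteq> Fplus S q F"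
proof
  fix y assume "y \<in> vars G"
  moreover have "(key S G, vars G) \<in> Kfd S (q - {F}) \<union> Kfd S (cpart S q)"
    using assms(1,2) unfolding Kfd_def cpart_def by blast
  ultimately show "y \<in> Fplus S q F"
    using assms(3) by (auto simp: Fplus_def fd_entails_def intro: fd_closure.step)
qed

lemma att_step_sym: "sym (att_step S q F)"
  by (auto simp: att_step_def sym_def)

lemma att_step_rtrancl_sym: "(A, B) \<in> (att_step S q F)\<^sup>* \<Longrightarrow> (B, A) \<in> (att_step S q F)\<^sup>*"
  by (meson att_step_sym sym_rtrancl symD)

lemma att_step_rtrancl_extend:
  assumes "(A, G) \<in> (att_step S q F)\<^sup>*" and "G \<in> q" and "H \<in> q"
    and "x \<in> vars G" and "x \<in> vars H" and "x \<notin> Fplus S q F"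
  shows "(A, H) \<in> (att_step S q F)\<^sup>*"
proof -
  have "(G, H) \<in> att_step S q F"
    using assms(2-) by (auto simp: att_step_def)
  with assms(1) show ?thesis
    by (rule rtrancl_into_rtrancl)
qed

lemma attacks_var_reaches:
  "attacks_var S q F x \<Longrightarrow> G \<in> q \<Longrightarrow> x \<in> vars G \<Longrightarrow> (F, G) \<in> (att_step S q F)\<^sup>*"
  unfolding attacks_var_def using att_step_rtrancl_extend by metis

lemma ModeC_attacks_nothing:
  assumes "rmode S (fst F) = ModeC"
  shows "\<not> attacks S q F G"
proof
  assume "attacks S q F G"
  then obtain H where "(F, H) \<in> att_step S q F" and "F \<in> q"
    by (auto simp: attacks_def dest: tranclD)
  then obtain x where "x \<in> vars F" "x \<notin> Fplus S q F"
    by (auto simp: att_step_def)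
  moreover have "vars F \<subseteq> Fplus S q F"
    using vars_subset_Fplus[OF \<open>F \<in> q\<close> _ key_subset_Fplus] assms by simp
  ultimately show False
    by blast
qed

definition reach_vars :: "'r schema \<Rightarrow> ('r, 'v, 'c) atom set \<Rightarrow> ('r, 'v, 'c) atom \<Rightarrow> ('r, 'v, 'c) atom
    \<Rightarrow> 'v set" where
  "reach_vars S q F G = {x. \<exists>H\<in>q. x \<in> vars H \<and> (G, H) \<in> (att_step S q F)\<^sup>*}"

lemma vars_subset_reach_vars: "G \<in> q \<Longrightarrow> vars G \<subseteq> reach_vars S q F G"
  by (auto simp: reach_vars_def)

lemma reach_vars_closed:
  assumes "H \<in> q" and "x \<in> vars H" and "x \<in> reach_vars S q F G" and "x \<notin> Fplus S q F"
  shows "vars H \<subseteq> reach_vars S q F G"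
proof -
  obtain G' where G': "(G, G') \<in> (att_step S q F)\<^sup>*" "G' \<in> q" "x \<in> vars G'"
    using assms(3) unfolding reach_vars_def by blast
  have "(G, H) \<in> (att_step S q F)\<^sup>*"
    using att_step_rtrancl_extend[OF G'(1,2) assms(1) G'(3) assms(2,4)] .
  then show ?thesis
    using assms(1) unfolding reach_vars_def by blast
qed

lemma attacks_var_iff_reach_vars:
  "attacks_var S q F x \<longleftrightarrow> F \<in> q \<and> x \<notin> Fplus S q F \<and> x \<in> reach_vars S q F F"
  unfolding attacks_var_def reach_vars_def by blast

section \<open>Swapping a fact of a repair\<close>

lemma swap_keeps_other_atoms:
  assumes "inj_on fst q" and "embeds (insert A' (r - {A})) q \<nu>" and "fst A' = fst F"
    and "G \<in> q" and "F \<in> q" and "G \<noteq> F"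
  shows "inst_atom \<nu> G \<in> r"
proof -
  have "fst (inst_atom \<nu> G) \<noteq> fst A'"
    using assms(1,3-) by (auto dest: inj_onD)
  then show ?thesis
    using assms(2,4) by (auto simp: embeds_def)
qed

text \<open>\<open>F\<^sup>+\<close> is reached from \<open>key F\<close> through the keys of the other atoms, whose
  images stay in the repair, and of the c-mode atoms, whose facts are unique in \<open>db\<close>.\<close>

lemma swap_agrees_on_Fplus:
  assumes db: "is_db S db" and inj: "inj_on fst q" and r: "is_repair S db r"
    and \<theta>: "embeds r q \<theta>" and F: "F \<in> q"
    and A': "A' \<in> db" "key_equal S (inst_atom \<theta> F) A'"
    and \<nu>: "embeds (insert A' (r - {inst_atom \<theta> F})) q \<nu>" "inst_atom \<nu> F = A'"
    and x: "x \<in> Fplus S q F"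
  shows "\<theta> x = \<nu> x"
proof -
  have cons: "consistent S r" and sub: "r \<subseteq> db"
    using r by (simp_all add: is_repair_def)
  have "x \<in> fd_closure (Kfd S (q - {F}) \<union> Kfd S (cpart S q)) (key S F)"
    using x by (simp add: Fplus_def fd_entails_def)
  then show ?thesis
  proof (induction rule: fd_closure.induct)
    case (base x)
    then show ?case
      using key_equal_inst_atomD A'(2) \<nu>(2) by metis
  next
    case (step L R y)
    then obtain G where G: "G \<in> q" "L = key S G" "R = vars G" "G \<noteq> F \<or> rmode S (fst G) = ModeC"
      unfolding Kfd_def cpart_def by blast
    have "inst_atom \<theta> G = inst_atom \<nu> G"
    proof (cases "G = F")
      case True
      have "inst_atom \<theta> F \<in> db"
        using \<theta> F sub by (auto simp: embeds_def)
      then have "inst_atom \<theta> F = A'"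
        using db A' G(4) True unfolding is_db_def by auto
      then show ?thesis
        using True \<nu>(2) by simp
    next
      case False
      have "fst A' = fst F"
        using A'(2) by (simp add: key_equal_def)
      then have "inst_atom \<nu> G \<in> r"
        using swap_keeps_other_atoms[OF inj \<nu>(1) _ G(1) F False] by simp
      moreover have "inst_atom \<theta> G \<in> r"
        using \<theta> G(1) by (simp add: embeds_def)
      moreover have "key_equal S (inst_atom \<theta> G) (inst_atom \<nu> G)"
        using step.IH G(2) by (intro key_equal_inst_atom) auto
      ultimately show ?thesis
        using cons by (simp add: consistent_def)
    qed
    then show ?case
      using inst_atom_eqD step.hyps G(3) by metis
  qed
qed

text \<open>The embedding \<open>\<nu>\<close> of the swapped repair is glued with \<open>\<theta>\<close> on the variables attacked
  by \<open>F\<close>. Atoms reachable from \<open>F\<close> only have variables in \<open>F\<^sup>+\<close>, where \<open>\<theta>\<close> and \<open>\<nu>\<close> agree,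
  or attacked by \<open>F\<close>; the other atoms have no variable attacked by \<open>F\<close>.\<close>

lemma swap_glued_embedding:
  assumes db: "is_db S db" and inj: "inj_on fst q" and r: "is_repair S db r"
    and \<theta>: "embeds r q \<theta>" and F: "F \<in> q"
    and A': "A' \<in> db" "key_equal S (inst_atom \<theta> F) A'"
    and \<nu>: "embeds (insert A' (r - {inst_atom \<theta> F})) q \<nu>" "inst_atom \<nu> F = A'"
  shows "embeds r q (\<lambda>x. if attacks_var S q F x then \<theta> x else \<nu> x)" (is "embeds r q ?\<kappa>")
  unfolding embeds_def
proof
  fix G assume G: "G \<in> q"
  show "inst_atom ?\<kappa> G \<in> r"
  proof (cases "(F, G) \<in> (att_step S q F)\<^sup>*")
    case True
    have "?\<kappa> x = \<theta> x" if "x \<in> vars G" for x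
    proof (cases "x \<in> Fplus S q F")
      case True
      then show ?thesis
        using swap_agrees_on_Fplus[OF db inj r \<theta> F A' \<nu>] by simp
    next
      case False
      then have "attacks_var S q F x"
        using F G \<open>(F, G) \<in> (att_step S q F)\<^sup>*\<close> that by (auto simp: attacks_var_def)
      then show ?thesis
        by simp
    qed
    then have "inst_atom ?\<kappa> G = inst_atom \<theta> G"
      by (rule inst_atom_cong)
    then show ?thesis
      using \<theta> G by (simp add: embeds_def)
  next
    case False
    then have "inst_atom ?\<kappa> G = inst_atom \<nu> G"
      using attacks_var_reaches[OF _ G, of S F] by (intro inst_atom_cong) auto
    moreover have "fst A' = fst F"
      using A'(2) by (simp add: key_equal_def)
    then have "inst_atom \<nu> G \<in> r"
      using swap_keeps_other_atoms[OF inj \<nu>(1) _ G F] False by auto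
    ultimately show ?thesis
      by simp
  qed
qed

lemma swap_answers_subset:
  assumes db: "is_db S db" and inj: "inj_on fst q" and r: "is_repair S db r"
    and \<theta>: "embeds r q \<theta>" and F: "F \<in> q"
    and A': "A' \<in> db" "key_equal S (inst_atom \<theta> F) A'"
    and xs: "\<forall>x\<in>set xs. \<not> attacks_var S q F x"
  shows "answers (insert A' (r - {inst_atom \<theta> F})) q xs \<subseteq> answers r q xs"
proof
  fix a assume "a \<in> answers (insert A' (r - {inst_atom \<theta> F})) q xs"
  then obtain \<nu> where \<nu>: "embeds (insert A' (r - {inst_atom \<theta> F})) q \<nu>" and a: "a = map \<nu> xs"
    by (auto simp: answers_def)
  show "a \<in> answers r q xs"
  proof (cases "inst_atom \<nu> F = A'")
    case True
    have "map (\<lambda>x. if attacks_var S q F x then \<theta> x else \<nu> x) xs = a"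
      using xs a by simp
    then show ?thesis
      using swap_glued_embedding[OF db inj r \<theta> F A' \<nu> True] by (auto simp: answers_def)
  next
    case False
    have "fst A' = fst F"
      using A'(2) by (simp add: key_equal_def)
    then have "inst_atom \<nu> G \<in> r" if "G \<in> q" for G
      using swap_keeps_other_atoms[OF inj \<nu> _ that F] False \<nu> F
      by (cases "G = F") (auto simp: embeds_def)
    then show ?thesis
      using a by (auto simp: answers_def embeds_def)
  qed
qed

locale internal_fd_proof =
  fixes S :: "'r schema" and q :: "('r, 'v, 'c) atom set" and Z :: "'v set" and w :: 'v
    and Fs :: "('r, 'v, 'c) atom list"
  assumes seq_proof: "seq_proof S q Z w Fs"
    and unattacked: "\<forall>F\<in>set Fs. \<forall>x\<in>insert w Z. \<not> attacks_var S q F x"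
    and Z_in_atom: "\<exists>F\<in>q. Z \<subseteq> vars F"
begin

lemma Fs_subset: "set Fs \<subseteq> q"
  using seq_proof by (simp add: seq_proof_def)

lemma key_covered: "i < length Fs \<Longrightarrow> key S (Fs ! i) \<subseteq> Z \<union> (\<Union>j<i. vars (Fs ! j))"
  using seq_proof by (simp add: seq_proof_def)

lemma w_in_Fs: "w \<in> \<Union> (vars ` set Fs)"
  using seq_proof by (auto simp: seq_proof_def)

lemma determined_vars_in_q: "insert w Z \<subseteq> \<Union> (vars ` q)"
  using w_in_Fs Fs_subset Z_in_atom by blast

lemma prefix_agree:
  assumes cons: "consistent S r" and "n \<le> length Fs"
    and "\<forall>m<n. inst_atom \<theta> (Fs ! m) \<in> r \<and> inst_atom \<mu> (Fs ! m) \<in> r"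
    and Z: "\<forall>z\<in>Z. \<theta> z = \<mu> z"
  shows "\<forall>m<n. \<forall>x\<in>vars (Fs ! m). \<theta> x = \<mu> x"
  using assms(2-3)
proof (induction n)
  case (Suc n)
  then have IH: "\<forall>m<n. \<forall>x\<in>vars (Fs ! m). \<theta> x = \<mu> x"
    by simp
  have "key_equal S (inst_atom \<theta> (Fs ! n)) (inst_atom \<mu> (Fs ! n))"
    using key_covered[of n] Suc.prems(1) IH Z by (intro key_equal_inst_atom) fastforce
  then have "inst_atom \<theta> (Fs ! n) = inst_atom \<mu> (Fs ! n)"
    using Suc.prems(2) cons by (simp add: consistent_def)
  then have "\<forall>x\<in>vars (Fs ! n). \<theta> x = \<mu> x"
    using inst_atom_eqD by metis
  with IH show ?case
    using less_Suc_eq by auto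
qed simp

lemma proof_vars_covered:
  assumes F: "F \<in> q" and G0: "G0 \<in> q" "Z \<subseteq> vars G0"
  defines "W \<equiv> Fplus S q F \<union> reach_vars S q F G0 \<union> (if F \<in> set Fs then reach_vars S q F F else {})"
  shows "i < length Fs \<Longrightarrow> vars (Fs ! i) \<subseteq> W"
proof (induction i rule: less_induct)
  case (less i)
  define G where "G = Fs ! i"
  have G: "G \<in> q" "G \<in> set Fs"
    using less.prems Fs_subset by (auto simp: G_def)
  have "Z \<subseteq> W"
    using G0 vars_subset_reach_vars[OF G0(1), of S F] by (auto simp: W_def)
  then have key_W: "key S G \<subseteq> W"
    using key_covered[OF less.prems] less.IH less.prems by (fastforce simp: G_def)
  show ?case
    unfolding G_def[symmetric]
  proof (cases "G = F \<or> key S G \<subseteq> Fplus S q F")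
    case True
    then show "vars G \<subseteq> W"
      using G vars_subset_reach_vars[OF F, of S F] vars_subset_Fplus[OF G(1), of F S]
      by (auto simp: W_def)
  next
    case False
    then obtain v where v: "v \<in> key S G" "v \<notin> Fplus S q F" and "G \<noteq> F"
      by blast
    then have "v \<in> vars G"
      using key_subset_vars[of S G] by blast
    moreover have "v \<in> reach_vars S q F G0 \<or> F \<in> set Fs \<and> v \<in> reach_vars S q F F"
      using key_W v by (auto simp: W_def split: if_splits)
    ultimately have "vars G \<subseteq> reach_vars S q F G0 \<or> F \<in> set Fs \<and> vars G \<subseteq> reach_vars S q F F"
      using reach_vars_closed[OF G(1) _ _ v(2)] by blast
    then show "vars G \<subseteq> W"
      by (auto simp: W_def)
  qed
qed

lemma determined_var_connected:
  assumes F: "F \<in> q" and G0: "G0 \<in> q" "Z \<subseteq> vars G0"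
    and H: "H \<in> q" "u \<in> vars H" and u: "u \<in> insert w Z" "u \<notin> Fplus S q F"
  shows "(H, G0) \<in> (att_step S q F)\<^sup>*"
proof -
  have "u \<in> reach_vars S q F G0"
  proof (cases "u = w")
    case True
    obtain F' where "F' \<in> set Fs" "w \<in> vars F'"
      using w_in_Fs by blast
    then obtain i where i: "i < length Fs" "w \<in> vars (Fs ! i)"
      by (metis in_set_conv_nth)
    have "w \<in> Fplus S q F \<union> reach_vars S q F G0 \<union>
        (if F \<in> set Fs then reach_vars S q F F else {})"
      by (rule subsetD[OF proof_vars_covered[OF F G0 i(1)] i(2)])
    moreover have "\<not> attacks_var S q F w" if "F \<in> set Fs"
      using unattacked that by simp
    then have "\<not> (F \<in> set Fs \<and> w \<in> reach_vars S q F F)"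
      using F u(2) True by (simp add: attacks_var_iff_reach_vars)
    ultimately show ?thesis
      using u(2) True by (cases "F \<in> set Fs") simp_all
  next
    case False
    then show ?thesis
      using u G0 vars_subset_reach_vars[OF G0(1), of S F] by blast
  qed
  then obtain H' where H': "H' \<in> q" "u \<in> vars H'" "(G0, H') \<in> (att_step S q F)\<^sup>*"
    unfolding reach_vars_def by blast
  have "(G0, H) \<in> (att_step S q F)\<^sup>*"
    using att_step_rtrancl_extend[OF H'(3) H'(1) H(1) H'(2) H(2) u(2)] .
  then show ?thesis
    by (rule att_step_rtrancl_sym)
qed

end

section \<open>The attack graph of the extended query\<close>

context internal_fd_proof
begin

text \<open>A path through the new atom \<open>N0\<close> enters and leaves it through variables of
  \<open>Z \<union> {w}\<close>, and all atoms containing such a variable outside \<open>F\<^sup>+\<close> are connected to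
  the atom containing \<open>Z\<close>: the detour through \<open>N0\<close> can be replaced by one through it.\<close>

lemma extension_path_reroutes:
  assumes N0: "N0 \<notin> q" "vars N0 \<subseteq> insert w Z" and F: "F \<in> q"
    and G0: "G0 \<in> q" "Z \<subseteq> vars G0" and A: "A \<in> q"
    and path: "(A, B) \<in> (att_step S (insert N0 q) F)\<^sup>*"
  shows "(B \<in> q \<longrightarrow> (A, B) \<in> (att_step S q F)\<^sup>*) \<and> (B = N0 \<longrightarrow> (A, G0) \<in> (att_step S q F)\<^sup>*)"
  using path
proof (induction rule: rtrancl_induct)
  case base
  then show ?case
    using A N0(1) by auto
next
  case (step B C)
  obtain x where x: "x \<in> vars B" "x \<in> vars C" "x \<notin> Fplus S q F"
    and BC: "B \<in> insert N0 q" "C \<in> insert N0 q"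
    using step.hyps(2) Fplus_mono[of q "insert N0 q" S F] by (auto simp: att_step_def)
  have to_G0: "(H, G0) \<in> (att_step S q F)\<^sup>*" if "H \<in> q" "x \<in> vars H" "x \<in> vars N0" for H
    using determined_var_connected[OF F G0 that(1,2)] N0(2) that(3) x(3) by blast
  consider "B \<in> q" "C \<in> q" | "B \<in> q" "C = N0" | "B = N0" "C \<in> q" | "B = N0" "C = N0"
    using BC by blast
  then show ?case
  proof cases
    case 1
    then have "(A, C) \<in> (att_step S q F)\<^sup>*"
      using step.IH att_step_rtrancl_extend[OF _ 1 x] by blast
    then show ?thesis
      using 1 N0(1) by blast
  next
    case 2
    then have "(A, B) \<in> (att_step S q F)\<^sup>*" "(B, G0) \<in> (att_step S q F)\<^sup>*"
      using step.IH to_G0[OF _ x(1)] x(2) by simp_all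
    then have "(A, G0) \<in> (att_step S q F)\<^sup>*"
      by (rule rtrancl_trans)
    then show ?thesis
      using 2 N0(1) by blast
  next
    case 3
    then have "(A, G0) \<in> (att_step S q F)\<^sup>*" "(G0, C) \<in> (att_step S q F)\<^sup>*"
      using step.IH to_G0[OF _ x(2)] x(1) att_step_rtrancl_sym by simp_all
    then have "(A, C) \<in> (att_step S q F)\<^sup>*"
      by (rule rtrancl_trans)
    then show ?thesis
      using 3 N0(1) by blast
  next
    case 4
    then show ?thesis
      using step.IH N0(1) by blast
  qed
qed

lemma attacks_of_extension:
  assumes N0: "N0 \<notin> q" "vars N0 \<subseteq> insert w Z"
    and FG: "F \<in> q" "G \<in> q" and attack: "attacks S (insert N0 q) F G"
  shows "attacks S q F G"
proof -
  obtain G0 where G0: "G0 \<in> q" "Z \<subseteq> vars G0"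
    using Z_in_atom by blast
  have "(F, G) \<in> (att_step S (insert N0 q) F)\<^sup>*"
    using attack by (simp add: attacks_def trancl_into_rtrancl)
  then have "(F, G) \<in> (att_step S q F)\<^sup>*"
    using extension_path_reroutes[OF N0 FG(1) G0 FG(1)] FG(2) by blast
  moreover have "F \<noteq> G"
    using attack by (simp add: attacks_def)
  ultimately show ?thesis
    using FG by (auto simp: attacks_def dest: rtranclD)
qed

lemma strong_attack_of_extension:
  assumes N0: "N0 \<notin> q" "vars N0 \<subseteq> insert w Z"
    and FG: "F \<in> q" "G \<in> q" and attack: "strong_attack S (insert N0 q) F G"
  shows "strong_attack S q F G"
proof -
  have "Kfd S q \<subseteq> Kfd S (insert N0 q)"
    by (auto simp: Kfd_def)
  then have "fd_entails (Kfd S q) (key S F) y \<Longrightarrow> fd_entails (Kfd S (insert N0 q)) (key S F) y" for y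
    by (auto simp: fd_entails_def intro: fd_closure_mono)
  then show ?thesis
    using attack attacks_of_extension[OF N0 FG] by (auto simp: strong_attack_def)
qed

lemma strong_cycle_of_extension:
  assumes N0: "N0 \<notin> q" "vars N0 \<subseteq> insert w Z" "rmode S (fst N0) = ModeC"
    and cycle: "has_strong_cycle S (insert N0 q)"
  shows "has_strong_cycle S q"
proof -
  obtain L where L: "L \<noteq> []" "distinct L"
    and attacks: "\<forall>i<length L. attacks S (insert N0 q) (L ! i) (L ! (Suc i mod length L))"
    and strong: "\<exists>i<length L. strong_attack S (insert N0 q) (L ! i) (L ! (Suc i mod length L))"
    using cycle unfolding has_strong_cycle_def by blast
  have in_q: "L ! i \<in> q" if "i < length L" for i
  proof -
    have attack: "attacks S (insert N0 q) (L ! i) (L ! (Suc i mod length L))"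
      using attacks that by blast
    then have "L ! i \<in> insert N0 q"
      by (simp add: attacks_def)
    moreover have "L ! i \<noteq> N0"
      using attack ModeC_attacks_nothing[OF N0(3)] by metis
    ultimately show ?thesis
      by simp
  qed
  have next_in_q: "L ! (Suc i mod length L) \<in> q" for i
    using L(1) in_q by simp
  have "\<forall>i<length L. attacks S q (L ! i) (L ! (Suc i mod length L))"
    using attacks in_q next_in_q attacks_of_extension[OF N0(1,2)] by blast
  moreover have "\<exists>i<length L. strong_attack S q (L ! i) (L ! (Suc i mod length L))"
    using strong in_q next_in_q strong_attack_of_extension[OF N0(1,2)] by blast
  ultimately show ?thesis
    using L unfolding has_strong_cycle_def by blast
qed

end

section \<open>Removing the answers of a repair\<close>

definition determines_value ::
    "('r, 'c) fact set \<Rightarrow> ('r, 'v, 'c) atom set \<Rightarrow> 'v list \<Rightarrow> 'c list \<Rightarrow> 'v \<Rightarrow> 'c \<Rightarrow> bool" where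
  "determines_value db p zs cs w d \<longleftrightarrow>
     (\<exists>\<mu>. embeds db p \<mu> \<and> map \<mu> zs = cs \<and> \<mu> w = d) \<and>
     (\<forall>\<mu>. embeds db p \<mu> \<and> map \<mu> zs = cs \<longrightarrow> \<mu> w = d)"

locale internal_fd_repairs = internal_fd_proof S q Z w Fs
  for S :: "'r schema" and q :: "('r, 'v, 'c) atom set" and Z w Fs +
  fixes db :: "('r, 'c) fact set" and zs :: "'v list"
  assumes inj_fst: "inj_on fst q" and is_db: "is_db S db" and set_zs: "set zs = Z"
begin

lemma swap_along_proof:
  assumes \<mu>: "embeds db (set Fs) \<mu>" and n: "n < length Fs"
    and r: "is_repair S db r" and \<theta>: "embeds r q \<theta>" and zs: "map \<theta> zs = map \<mu> zs"
    and agree: "\<forall>m<n. \<forall>x\<in>vars (Fs ! m). \<theta> x = \<mu> x"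
  defines "r' \<equiv> insert (inst_atom \<mu> (Fs ! n)) (r - {inst_atom \<theta> (Fs ! n)})"
  shows "is_repair S db r'" and "answers r' q (zs @ [w]) \<subseteq> answers r q (zs @ [w])"
proof -
  define F where "F = Fs ! n"
  have F: "F \<in> set Fs" "F \<in> q"
    using n Fs_subset by (auto simp: F_def)
  have Z: "\<forall>z\<in>Z. \<theta> z = \<mu> z"
    using zs set_zs by simp
  have keq: "key_equal S (inst_atom \<theta> F) (inst_atom \<mu> F)"
    using key_covered[OF n] agree Z by (intro key_equal_inst_atom) (fastforce simp: F_def)
  have A': "inst_atom \<mu> F \<in> db"
    using \<mu> F by (simp add: embeds_def)
  have "inst_atom \<theta> F \<in> r"
    using \<theta> F by (simp add: embeds_def)
  then show "is_repair S db r'"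
    unfolding r'_def F_def[symmetric] using A' keq by (rule is_repair_swap[OF r])
  have "\<forall>x\<in>set (zs @ [w]). \<not> attacks_var S q F x"
    using unattacked F set_zs by auto
  then show "answers r' q (zs @ [w]) \<subseteq> answers r q (zs @ [w])"
    unfolding r'_def F_def[symmetric]
    by (rule swap_answers_subset[OF is_db inj_fst r \<theta> \<open>F \<in> q\<close> A' keq])
qed

lemma swap_along_proof_agree:
  assumes \<mu>: "embeds db (set Fs) \<mu>" and n: "n < length Fs"
    and r: "is_repair S db r" and \<theta>: "embeds r q \<theta>" and zs: "map \<theta> zs = map \<mu> zs"
    and agree: "\<forall>m<n. \<forall>x\<in>vars (Fs ! m). \<theta> x = \<mu> x"
  defines "r' \<equiv> insert (inst_atom \<mu> (Fs ! n)) (r - {inst_atom \<theta> (Fs ! n)})"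
  assumes \<theta>': "embeds r' q \<theta>'" and zs': "map \<theta>' zs = map \<mu> zs"
  shows "\<forall>m<Suc n. \<forall>x\<in>vars (Fs ! m). \<theta>' x = \<mu> x"
proof -
  define F where "F = Fs ! n"
  have F: "F \<in> q"
    using n Fs_subset by (auto simp: F_def)
  have "inst_atom \<mu> (Fs ! m) \<in> r'" if m: "m < Suc n" for m
  proof (cases "Fs ! m = F")
    case True
    then show ?thesis by (simp add: r'_def F_def)
  next
    case False
    then have "m < n" "Fs ! m \<in> q"
      using m n Fs_subset by (auto simp: F_def less_Suc_eq)
    then have "inst_atom \<mu> (Fs ! m) = inst_atom \<theta> (Fs ! m)" "inst_atom \<theta> (Fs ! m) \<in> r"
      using agree \<theta> inst_atom_cong[of "Fs ! m" \<theta> \<mu>] by (auto simp: embeds_def)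
    moreover have "inst_atom \<theta> (Fs ! m) \<noteq> inst_atom \<theta> F"
      using False \<open>Fs ! m \<in> q\<close> F inj_fst by (metis fst_inst_atom inj_onD)
    ultimately show ?thesis
      by (simp add: r'_def F_def)
  qed
  moreover have "inst_atom \<theta>' (Fs ! m) \<in> r'" if "m < Suc n" for m
  proof -
    have "Fs ! m \<in> q"
      using that n Fs_subset nth_mem[of m Fs] by auto
    then show ?thesis
      using \<theta>' by (simp add: embeds_def)
  qed
  moreover have "consistent S r'"
    using swap_along_proof(1)[OF \<mu> n r \<theta> zs agree] by (simp add: r'_def repair_consistent)
  ultimately show ?thesis
    using prefix_agree[of r' "Suc n" \<theta>' \<mu>] n zs' set_zs by simp
qed

text \<open>Walking along the sequential proof, each atom's image is replaced by that of \<open>\<mu>\<close>;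
  if the answer of \<open>\<theta>\<close> survived all swaps, the surviving embedding would agree with \<open>\<mu>\<close>
  on every variable of the proof, in particular on \<open>w\<close>.\<close>

lemma repair_with_fewer_answers:
  assumes \<mu>: "embeds db (set Fs) \<mu>"
  shows "n \<le> length Fs \<Longrightarrow> is_repair S db r \<Longrightarrow> embeds r q \<theta> \<Longrightarrow> map \<theta> zs = map \<mu> zs
    \<Longrightarrow> \<theta> w \<noteq> \<mu> w \<Longrightarrow> \<forall>m<n. \<forall>x\<in>vars (Fs ! m). \<theta> x = \<mu> x
    \<Longrightarrow> \<exists>r'. is_repair S db r' \<and> answers r' q (zs @ [w]) \<subset> answers r q (zs @ [w])"
proof (induction "length Fs - n" arbitrary: n r \<theta> rule: less_induct)
  case less
  note r = less.prems(2) and \<theta> = less.prems(3) and zs = less.prems(4) and w = less.prems(5)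
    and agree = less.prems(6)
  have n: "n < length Fs"
  proof (rule ccontr)
    assume "\<not> n < length Fs"
    then have all: "\<forall>m<length Fs. \<forall>x\<in>vars (Fs ! m). \<theta> x = \<mu> x"
      using agree less.prems(1) by simp
    obtain m where "m < length Fs" "w \<in> vars (Fs ! m)"
      using w_in_Fs by (auto simp: in_set_conv_nth)
    with all w show False
      by blast
  qed
  define r1 where "r1 = insert (inst_atom \<mu> (Fs ! n)) (r - {inst_atom \<theta> (Fs ! n)})"
  have r1: "is_repair S db r1" and sub: "answers r1 q (zs @ [w]) \<subseteq> answers r q (zs @ [w])"
    using swap_along_proof(1,2)[OF \<mu> n r \<theta> zs agree] by (simp_all add: r1_def)
  have \<theta>_answer: "map \<theta> (zs @ [w]) \<in> answers r q (zs @ [w])"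
    using \<theta> by (auto simp: answers_def)
  show ?case
  proof (cases "map \<theta> (zs @ [w]) \<in> answers r1 q (zs @ [w])")
    case False
    then show ?thesis
      using r1 sub \<theta>_answer by blast
  next
    case True
    then obtain \<theta>1 where \<theta>1: "embeds r1 q \<theta>1" "map \<theta>1 (zs @ [w]) = map \<theta> (zs @ [w])"
      by (auto simp: answers_def)
    then have zs1: "map \<theta>1 zs = map \<mu> zs" and w1: "\<theta>1 w \<noteq> \<mu> w"
      using zs w by simp_all
    have agree1: "\<forall>m<Suc n. \<forall>x\<in>vars (Fs ! m). \<theta>1 x = \<mu> x"
      using swap_along_proof_agree[OF \<mu> n r \<theta> zs agree, folded r1_def, OF \<theta>1(1) zs1] .
    have "length Fs - Suc n < length Fs - n" "Suc n \<le> length Fs"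
      using n by simp_all
    then obtain r' where "is_repair S db r'" "answers r' q (zs @ [w]) \<subset> answers r1 q (zs @ [w])"
      using less.hyps[OF _ _ r1 \<theta>1(1) zs1 w1 agree1] by blast
    then show ?thesis
      using sub by blast
  qed
qed

lemma repair_falsifying_query:
  assumes "is_repair S db r"
    and "\<forall>\<theta>. embeds r q \<theta> \<longrightarrow> \<not> determines_value db (set Fs) zs (map \<theta> zs) w (\<theta> w)"
  shows "\<exists>r'. is_repair S db r' \<and> \<not> satisfies r' q"
  using assms
proof (induction "card (answers r q (zs @ [w]))" arbitrary: r rule: less_induct)
  case less
  note r = less.prems(1) and undetermined = less.prems(2)
  show ?case
  proof (cases "satisfies r q")
    case True
    then obtain \<theta> where \<theta>: "embeds r q \<theta>"
      by (auto simp: satisfies_iff_embeds)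
    moreover have "embeds db (set Fs) \<theta>"
      using embeds_mono[OF \<theta> repair_subset[OF r] Fs_subset] .
    ultimately obtain \<mu> where \<mu>: "embeds db (set Fs) \<mu>" "map \<theta> zs = map \<mu> zs" "\<theta> w \<noteq> \<mu> w"
      using undetermined unfolding determines_value_def by fastforce
    obtain r1 where r1: "is_repair S db r1" and
      smaller: "answers r1 q (zs @ [w]) \<subset> answers r q (zs @ [w])"
      using repair_with_fewer_answers[OF \<mu>(1) _ r \<theta> \<mu>(2,3), of 0] by auto
    have "finite (answers r q (zs @ [w]))"
      using repair_subset[OF r] is_db determined_vars_in_q set_zs
      by (intro finite_answers) (auto simp: is_db_def intro: finite_subset)
    then have fewer: "card (answers r1 q (zs @ [w])) < card (answers r q (zs @ [w]))"
      using smaller by (rule psubset_card_mono)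
    have "\<not> determines_value db (set Fs) zs (map \<theta>1 zs) w (\<theta>1 w)"
      if "embeds r1 q \<theta>1" for \<theta>1
    proof -
      have "map \<theta>1 (zs @ [w]) \<in> answers r1 q (zs @ [w])"
        using that by (auto simp: answers_def)
      then have "map \<theta>1 (zs @ [w]) \<in> answers r q (zs @ [w])"
        using smaller by blast
      then obtain \<theta>' where \<theta>': "embeds r q \<theta>'" "map \<theta>1 (zs @ [w]) = map \<theta>' (zs @ [w])"
        unfolding answers_def by blast
      then have "map \<theta>1 zs = map \<theta>' zs" "\<theta>1 w = \<theta>' w"
        by simp_all
      then show ?thesis
        using undetermined \<theta>'(1) by metis
    qed
    then show ?thesis
      using less.hyps[OF fewer r1] by blast
  qed (use r in blast)
qed

end

section \<open>The reduction on databases\<close>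

text \<open>\<open>D\<close> stands for the domain of the first-order query defining the reduction: the active
  domain of \<open>db\<close> together with the constants of the query.\<close>

definition fd_extension :: "('r, 'v, 'c) atom set \<Rightarrow> ('r, 'v, 'c) atom set \<Rightarrow> 'v list \<Rightarrow> 'v \<Rightarrow> 'r
    \<Rightarrow> 'c set \<Rightarrow> ('r, 'c) fact set \<Rightarrow> ('r, 'c) fact set" where
  "fd_extension q p zs w N D db =
     {A \<in> db. fst A \<in> fst ` q} \<union>
     {(N, cs @ [d]) | cs d. set cs \<subseteq> D \<and> d \<in> D \<and> determines_value db p zs cs w d}"

lemma determines_value_length: "determines_value db p zs cs w d \<Longrightarrow> length cs = length zs"
  by (auto simp: determines_value_def)

lemma determines_value_unique:
  "determines_value db p zs cs w d \<Longrightarrow> determines_value db p zs cs w d' \<Longrightarrow> d = d'"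
  by (auto simp: determines_value_def)

lemma length_Suc_conv_snoc: "length as = Suc k \<longleftrightarrow> (\<exists>cs d. as = cs @ [d] \<and> length cs = k)"
  by (metis length_Suc_conv_rev length_append_singleton)

lemma determines_value_snoc_iff:
  "length as = Suc (length zs) \<and> set as \<subseteq> D \<and>
      determines_value db p zs (take (length zs) as) w (as ! length zs) \<longleftrightarrow>
    (\<exists>cs d. as = cs @ [d] \<and> set cs \<subseteq> D \<and> d \<in> D \<and> determines_value db p zs cs w d)"
proof
  assume as: "length as = Suc (length zs) \<and> set as \<subseteq> D \<and>
    determines_value db p zs (take (length zs) as) w (as ! length zs)"
  then obtain cs d where cs: "as = cs @ [d]" "length cs = length zs"
    using length_Suc_conv_snoc by metis
  then have "take (length zs) as = cs" "as ! length zs = d"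
    using cs(2)[symmetric] by simp_all
  with as cs(1) show "\<exists>cs d. as = cs @ [d] \<and> set cs \<subseteq> D \<and> d \<in> D \<and> determines_value db p zs cs w d"
    by auto
next
  assume "\<exists>cs d. as = cs @ [d] \<and> set cs \<subseteq> D \<and> d \<in> D \<and> determines_value db p zs cs w d"
  then obtain cs d where "as = cs @ [d]" "set cs \<subseteq> D" "d \<in> D"
    and det: "determines_value db p zs cs w d"
    by blast
  moreover have "length zs = length cs"
    using determines_value_length[OF det] by simp
  ultimately show "length as = Suc (length zs) \<and> set as \<subseteq> D \<and>
      determines_value db p zs (take (length zs) as) w (as ! length zs)"
    by simp
qed

locale fd_extension_setting = internal_fd_repairs S q Z w Fs db zs
  for S :: "'r schema" and q :: "('r, 'v, 'c) atom set" and Z w Fs db zs +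
  fixes N :: 'r and D :: "'c set"
  assumes N_fresh: "N \<notin> fst ` q" and arity_N: "arity S N = Suc (length zs)"
    and keylen_N: "keylen S N = length zs" and mode_N: "rmode S N = ModeC"
    and finite_D: "finite D" and adom_subset_D: "adom db \<subseteq> D"
begin

abbreviation fd_atom :: "('r, 'v, 'c) atom" where
  "fd_atom \<equiv> (N, map Var zs @ [Var w])"

abbreviation db' :: "('r, 'c) fact set" where
  "db' \<equiv> fd_extension q (set Fs) zs w N D db"

lemma inst_fd_atom: "inst_atom \<theta> fd_atom = (N, map \<theta> zs @ [\<theta> w])"
  by (simp add: inst_atom_def)

lemma fst_atom_ne_N: "F \<in> q \<Longrightarrow> fst F \<noteq> N"
  using N_fresh by force

lemma db'_other_relation: "fst A \<noteq> N \<Longrightarrow> A \<in> db' \<longleftrightarrow> A \<in> db \<and> fst A \<in> fst ` q"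
  by (auto simp: fd_extension_def)

lemma db'_N_facts_unique:
  assumes "A \<in> db'" "B \<in> db'" "fst A = N" "key_equal S A B"
  shows "A = B"
proof -
  have "fst B = N"
    using assms(3,4) by (simp add: key_equal_def)
  then obtain cs d cs' d' where A: "A = (N, cs @ [d])" "determines_value db (set Fs) zs cs w d"
    and B: "B = (N, cs' @ [d'])" "determines_value db (set Fs) zs cs' w d'"
    using assms(1-3) N_fresh by (auto simp: fd_extension_def)
  have "cs = cs'"
    using assms(4) A B keylen_N determines_value_length[OF A(2)] determines_value_length[OF B(2)]
    by (simp add: key_equal_def)
  then have "d = d'"
    using A(2) B(2) determines_value_unique by metis
  with A B \<open>cs = cs'\<close> show ?thesis
    by simp
qed

lemma is_db_db': "is_db S db'"
  unfolding is_db_def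
proof (intro conjI ballI impI)
  have "db' \<subseteq> db \<union> {N} \<times> {as. set as \<subseteq> D \<and> length as = Suc (length zs)}"
    by (auto simp: fd_extension_def dest: determines_value_length)
  moreover have "finite ({N} \<times> {as. set as \<subseteq> D \<and> length as = Suc (length zs)})"
    using finite_D finite_lists_length_eq by blast
  moreover have "finite db"
    using is_db by (simp add: is_db_def)
  ultimately show "finite db'"
    by (meson finite_Un finite_subset)
next
  fix A assume "A \<in> db'"
  then show "length (snd A) = arity S (fst A)"
    using is_db arity_N by (auto simp: fd_extension_def is_db_def dest: determines_value_length)
next
  fix A B assume A: "A \<in> db'" and B: "B \<in> db'" and AB: "rmode S (fst A) = ModeC \<and> key_equal S A B"
  show "A = B"
  proof (cases "fst A = N")
    case True
    then show ?thesis
      using A B AB db'_N_facts_unique by blast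
  next
    case False
    moreover have "fst B = fst A"
      using AB by (simp add: key_equal_def)
    ultimately have "A \<in> db" "B \<in> db"
      using A B db'_other_relation by auto
    then show ?thesis
      using is_db AB unfolding is_db_def by blast
  qed
qed

lemma repair_db'_of_repair:
  assumes r: "is_repair S db r"
  shows "is_repair S db' ({A \<in> r. fst A \<in> fst ` q} \<union> {A \<in> db'. fst A = N})"
    (is "is_repair S db' ?r'")
  unfolding is_repair_iff
proof (intro conjI ballI)
  show sub: "?r' \<subseteq> db'"
    using repair_subset[OF r] by (auto simp: fd_extension_def)
  show "consistent S ?r'"
    unfolding consistent_def
  proof (intro ballI impI)
    fix A B assume A: "A \<in> ?r'" and B: "B \<in> ?r'" and AB: "key_equal S A B"
    have "fst B = fst A"
      using AB by (simp add: key_equal_def)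
    show "A = B"
    proof (cases "fst A = N")
      case True
      then show ?thesis
        using A B AB sub db'_N_facts_unique by blast
    next
      case False
      then have "A \<in> r" "B \<in> r"
        using A B \<open>fst B = fst A\<close> by auto
      then show ?thesis
        using AB repair_consistent[OF r] by (simp add: consistent_def)
    qed
  qed
  fix A assume A: "A \<in> db'"
  show "\<exists>B\<in>?r'. key_equal S A B"
  proof (cases "fst A = N")
    case True
    then show ?thesis
      using A key_equal_refl by blast
  next
    case False
    then have "A \<in> db" "fst A \<in> fst ` q"
      using A db'_other_relation by auto
    then obtain B where "B \<in> r" "key_equal S A B"
      using repair_blocks[OF r] by blast
    moreover have "fst B = fst A"
      using \<open>key_equal S A B\<close> by (simp add: key_equal_def)
    ultimately have "B \<in> ?r'"
      using \<open>fst A \<in> fst ` q\<close> by simp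
    then show ?thesis
      using \<open>key_equal S A B\<close> by blast
  qed
qed

lemma certain_if_db'_certain:
  assumes "db' \<in> certainty S (insert fd_atom q)"
  shows "db \<in> certainty S q"
proof -
  have "satisfies r q" if r: "is_repair S db r" for r
  proof -
    let ?r' = "{A \<in> r. fst A \<in> fst ` q} \<union> {A \<in> db'. fst A = N}"
    have "satisfies ?r' (insert fd_atom q)"
      using assms repair_db'_of_repair[OF r] by (simp add: certainty_def)
    then obtain \<theta> where "embeds ?r' (insert fd_atom q) \<theta>"
      unfolding satisfies_iff_embeds by blast
    then have "embeds r q \<theta>"
      using fst_atom_ne_N by (auto simp: embeds_def)
    then show ?thesis
      by (auto simp: satisfies_iff_embeds)
  qed
  then show ?thesis
    using is_db by (simp add: certainty_def)
qed

lemma repair_of_db'_repair: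
  assumes r': "is_repair S db' r'"
  obtains r where "is_repair S db r" and "\<And>\<theta>. embeds r q \<theta> \<Longrightarrow> embeds r' q \<theta>"
proof -
  define r0 where "r0 = {A \<in> r'. fst A \<noteq> N}"
  have "r0 \<subseteq> db"
    using repair_subset[OF r'] db'_other_relation by (auto simp: r0_def)
  moreover have "consistent S r0"
    using repair_consistent[OF r'] by (auto simp: r0_def consistent_def)
  ultimately obtain r where "r0 \<subseteq> r" and r: "is_repair S db r"
    using consistent_extends_to_repair is_db by (metis is_db_def)
  have "embeds r' q \<theta>" if \<theta>: "embeds r q \<theta>" for \<theta>
    unfolding embeds_def
  proof
    fix F assume F: "F \<in> q"
    define A where "A = inst_atom \<theta> F"
    have "A \<in> r" "fst A \<noteq> N"
      using \<theta> F fst_atom_ne_N by (auto simp: A_def embeds_def)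
    then have "A \<in> db'"
      using repair_subset[OF r] F db'_other_relation by (auto simp: A_def)
    then obtain B where B: "B \<in> r'" "key_equal S A B"
      using repair_blocks[OF r'] by blast
    moreover have "B \<in> r"
      using B \<open>fst A \<noteq> N\<close> \<open>r0 \<subseteq> r\<close> by (auto simp: r0_def key_equal_def)
    ultimately show "inst_atom \<theta> F \<in> r'"
      using \<open>A \<in> r\<close> repair_consistent[OF r] by (auto simp: A_def consistent_def)
  qed
  with r that show thesis
    by blast
qed

lemma determined_fd_fact_in_repair:
  assumes r': "is_repair S db' r'" and \<theta>: "embeds db q \<theta>"
    and det: "determines_value db (set Fs) zs (map \<theta> zs) w (\<theta> w)"
  shows "inst_atom \<theta> fd_atom \<in> r'"
proof -
  have in_D: "\<theta> x \<in> D" if "x \<in> insert w Z" for x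
  proof -
    have "x \<in> \<Union> (vars ` q)"
      using that determined_vars_in_q by blast
    then show ?thesis
      using embeds_in_adom[OF \<theta>] adom_subset_D by blast
  qed
  have "set (map \<theta> zs) \<subseteq> D" "\<theta> w \<in> D"
    using in_D set_zs by auto
  then have N_fact: "inst_atom \<theta> fd_atom \<in> db'"
    unfolding inst_fd_atom fd_extension_def using det by blast
  then obtain B where B: "B \<in> r'" "key_equal S (inst_atom \<theta> fd_atom) B"
    using repair_blocks[OF r'] by blast
  moreover have "B \<in> db'"
    using B(1) repair_subset[OF r'] by blast
  ultimately have "inst_atom \<theta> fd_atom = B"
    using db'_N_facts_unique[OF N_fact] by (simp add: inst_fd_atom)
  then show ?thesis
    using B by simp
qed

text \<open>An embedding of \<open>q\<close> into the repair of \<open>db\<close> underlying a repair that falsifies the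
  extended query cannot determine its value of \<open>w\<close>: the \<open>N\<close>-fact would complete it.\<close>

lemma db'_certain_if_certain:
  assumes certain: "db \<in> certainty S q"
  shows "db' \<in> certainty S (insert fd_atom q)"
proof -
  have "satisfies r' (insert fd_atom q)" if r': "is_repair S db' r'" for r'
  proof (rule ccontr)
    assume unsat: "\<not> satisfies r' (insert fd_atom q)"
    obtain r where r: "is_repair S db r" and embeds_r': "\<And>\<theta>. embeds r q \<theta> \<Longrightarrow> embeds r' q \<theta>"
      using repair_of_db'_repair[OF r'] by blast
    have "\<not> determines_value db (set Fs) zs (map \<theta> zs) w (\<theta> w)" if \<theta>: "embeds r q \<theta>" for \<theta>
    proof
      assume "determines_value db (set Fs) zs (map \<theta> zs) w (\<theta> w)"
      moreover have "embeds db q \<theta>"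
        using embeds_mono[OF \<theta> repair_subset[OF r]] by simp
      ultimately have "inst_atom \<theta> fd_atom \<in> r'"
        using determined_fd_fact_in_repair[OF r'] by blast
      then show False
        using embeds_r'[OF \<theta>] unsat by (auto simp: satisfies_iff_embeds)
    qed
    then obtain r'' where "is_repair S db r''" "\<not> satisfies r'' q"
      using repair_falsifying_query[OF r] by blast
    then show False
      using certain by (auto simp: certainty_def)
  qed
  then show ?thesis
    using is_db_db' by (simp add: certainty_def)
qed

lemma certainty_db'_iff: "db \<in> certainty S q \<longleftrightarrow> db' \<in> certainty S (insert fd_atom q)"
  using certain_if_db'_certain db'_certain_if_certain by blast

end

section \<open>First-order definability\<close>

lemma map_eq_map_upt_iff: "map f xs = map g [0..<length xs] \<longleftrightarrow> (\<forall>j<length xs. f (xs ! j) = g j)"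
proof
  assume "map f xs = map g [0..<length xs]"
  then show "\<forall>j<length xs. f (xs ! j) = g j"
    by (metis diff_zero length_upt nth_map nth_upt plus_nat.add_0)
qed (intro nth_equalityI, simp_all)

fun fo_exists_list :: "nat list \<Rightarrow> ('r, 'c) fo \<Rightarrow> ('r, 'c) fo" where
  "fo_exists_list [] \<phi> = \<phi>"
| "fo_exists_list (i # is) \<phi> = FEx i (fo_exists_list is \<phi>)"

fun fo_conj_list :: "('r, 'c) fo list \<Rightarrow> ('r, 'c) fo \<Rightarrow> ('r, 'c) fo" where
  "fo_conj_list [] \<phi> = \<phi>"
| "fo_conj_list (\<psi> # \<psi>s) \<phi> = FAnd \<psi> (fo_conj_list \<psi>s \<phi>)"

lemma fo_eval_exists_list:
  "fo_eval D db \<sigma> (fo_exists_list is \<phi>) \<longleftrightarrow>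
     (\<exists>\<tau>. (\<forall>j. j \<notin> set is \<longrightarrow> \<tau> j = \<sigma> j) \<and> (\<forall>i\<in>set is. \<tau> i \<in> D) \<and> fo_eval D db \<tau> \<phi>)"
proof (induction "is" arbitrary: \<sigma>)
  case Nil
  then show ?case
    by (simp flip: fun_eq_iff)
next
  case (Cons i "is")
  show ?case
  proof
    assume "fo_eval D db \<sigma> (fo_exists_list (i # is) \<phi>)"
    then obtain a where a: "a \<in> D" "fo_eval D db (\<sigma>(i := a)) (fo_exists_list is \<phi>)"
      by auto
    then obtain \<tau> where \<tau>: "\<forall>j. j \<notin> set is \<longrightarrow> \<tau> j = (\<sigma>(i := a)) j"
      "\<forall>i\<in>set is. \<tau> i \<in> D" "fo_eval D db \<tau> \<phi>"
      using Cons.IH[of "\<sigma>(i := a)"] by blast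
    have "\<forall>j. j \<notin> set (i # is) \<longrightarrow> \<tau> j = \<sigma> j"
      using \<tau>(1) by simp
    moreover have "\<forall>k\<in>set (i # is). \<tau> k \<in> D"
      using a(1) \<tau>(1,2) by (cases "i \<in> set is") auto
    ultimately show "\<exists>\<tau>. (\<forall>j. j \<notin> set (i # is) \<longrightarrow> \<tau> j = \<sigma> j) \<and> (\<forall>i\<in>set (i # is). \<tau> i \<in> D) \<and>
        fo_eval D db \<tau> \<phi>"
      using \<tau>(3) by blast
  next
    assume "\<exists>\<tau>. (\<forall>j. j \<notin> set (i # is) \<longrightarrow> \<tau> j = \<sigma> j) \<and> (\<forall>i\<in>set (i # is). \<tau> i \<in> D) \<and>
        fo_eval D db \<tau> \<phi>"
    then obtain \<tau> where \<tau>: "\<forall>j. j \<notin> set (i # is) \<longrightarrow> \<tau> j = \<sigma> j" "\<forall>i\<in>set (i # is). \<tau> i \<in> D"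
      "fo_eval D db \<tau> \<phi>"
      by blast
    then have "\<forall>j. j \<notin> set is \<longrightarrow> \<tau> j = (\<sigma>(i := \<tau> i)) j"
      by simp
    then have "fo_eval D db (\<sigma>(i := \<tau> i)) (fo_exists_list is \<phi>)"
      unfolding Cons.IH using \<tau>(2,3) by (intro exI[of _ \<tau>]) auto
    then show "fo_eval D db \<sigma> (fo_exists_list (i # is) \<phi>)"
      using \<tau>(2) by auto
  qed
qed

lemma fo_fv_exists_list: "fo_fv (fo_exists_list is \<phi>) = fo_fv \<phi> - set is"
  by (induction "is") auto

lemma fo_eval_conj_list:
  "fo_eval D db \<sigma> (fo_conj_list \<psi>s \<phi>) \<longleftrightarrow> (\<forall>\<psi>\<in>set \<psi>s. fo_eval D db \<sigma> \<psi>) \<and> fo_eval D db \<sigma> \<phi>"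
  by (induction \<psi>s) auto

lemma fo_fv_conj_list: "fo_fv (fo_conj_list \<psi>s \<phi>) = (\<Union>\<psi>\<in>set \<psi>s. fo_fv \<psi>) \<union> fo_fv \<phi>"
  by (induction \<psi>s) auto

lemma finite_fo_consts: "finite (fo_consts \<phi>)"
proof -
  have "finite (fterm_consts t)" for t :: "'c fterm"
    by (cases t) auto
  then show ?thesis
    by (induction \<phi>) auto
qed

fun fterm_of_qterm :: "('v \<Rightarrow> nat) \<Rightarrow> ('v, 'c) qterm \<Rightarrow> 'c fterm" where
  "fterm_of_qterm ix (Var x) = FVar (ix x)"
| "fterm_of_qterm ix (Cst c) = FConst c"

definition atom_formula :: "('v \<Rightarrow> nat) \<Rightarrow> ('r, 'v, 'c) atom \<Rightarrow> ('r, 'c) fo" where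
  "atom_formula ix F = FAtom (fst F) (map (fterm_of_qterm ix) (snd F))"

lemma fo_eval_atom_formula: "fo_eval D db \<sigma> (atom_formula ix F) \<longleftrightarrow> inst_atom (\<sigma> \<circ> ix) F \<in> db"
proof -
  have "fterm_val \<sigma> (fterm_of_qterm ix t) = inst (\<sigma> \<circ> ix) t" for t
    by (cases t) auto
  then show ?thesis
    by (simp add: atom_formula_def inst_atom_def comp_def)
qed

lemma fo_fv_atom_formula: "fo_fv (atom_formula ix F) \<subseteq> ix ` vars F"
proof -
  have "fterm_fv (fterm_of_qterm ix t) \<subseteq> {ix x | x. t = Var x}" for t
    by (cases t) auto
  then show ?thesis
    unfolding atom_formula_def vars_def by fastforce
qed

text \<open>The variables of the conjunctive query \<open>Fs\<close> are encoded by \<open>ix\<close> as formula variables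
  above \<open>length zs\<close>; formula variable \<open>j < length zs\<close> holds the value of \<open>zs ! j\<close>.\<close>

definition embedding_body ::
    "('v \<Rightarrow> nat) \<Rightarrow> ('r, 'v, 'c) atom list \<Rightarrow> 'v list \<Rightarrow> ('r, 'c) fo \<Rightarrow> ('r, 'c) fo" where
  "embedding_body ix Fs zs \<psi> =
     fo_conj_list
       (map (atom_formula ix) Fs @ map (\<lambda>j. FEq (FVar (ix (zs ! j))) (FVar j)) [0..<length zs]) \<psi>"

definition embedding_formula ::
    "('v \<Rightarrow> nat) \<Rightarrow> ('r, 'v, 'c) atom list \<Rightarrow> 'v list \<Rightarrow> ('r, 'c) fo \<Rightarrow> ('r, 'c) fo" where
  "embedding_formula ix Fs zs \<psi> =
     fo_exists_list (sorted_list_of_set (ix ` (\<Union> (vars ` set Fs) \<union> set zs)))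
       (embedding_body ix Fs zs \<psi>)"

lemma fo_eval_embedding_body:
  "fo_eval D db \<tau> (embedding_body ix Fs zs \<psi>) \<longleftrightarrow>
     embeds db (set Fs) (\<tau> \<circ> ix) \<and> map (\<tau> \<circ> ix) zs = map \<tau> [0..<length zs] \<and> fo_eval D db \<tau> \<psi>"
proof -
  have "(\<forall>j\<in>{..<n}. Q j) \<longleftrightarrow> (\<forall>j<n. Q j)" for n :: nat and Q
    by blast
  then show ?thesis
    by (simp add: embedding_body_def fo_eval_conj_list fo_eval_atom_formula embeds_def ball_Un
        Ball_image_comp map_eq_map_upt_iff atLeast0LessThan)
qed

lemma override_on_inj_image:
  assumes "inj_on ix V"
  obtains \<tau> :: "nat \<Rightarrow> 'c" where "\<And>x. x \<in> V \<Longrightarrow> \<tau> (ix x) = \<mu> x" and "\<And>j. j \<notin> ix ` V \<Longrightarrow> \<tau> j = \<sigma> j"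
proof
  show "(if ix x \<in> ix ` V then \<mu> (inv_into V ix (ix x)) else \<sigma> (ix x)) = \<mu> x" if "x \<in> V" for x
    using assms that by simp
qed simp

lemma embedding_values_in_domain:
  assumes "embeds db (set Fs) \<mu>" and "map \<mu> zs = map \<sigma> [0..<length zs]"
    and "adom db \<subseteq> D" and "\<forall>j<length zs. \<sigma> j \<in> D" and x: "x \<in> \<Union> (vars ` set Fs) \<union> set zs"
  shows "\<mu> x \<in> D"
proof (cases "x \<in> set zs")
  case True
  then obtain j where "j < length zs" "x = zs ! j"
    by (auto simp: in_set_conv_nth)
  then show ?thesis
    using assms(2,4) by (metis length_map nth_map nth_upt add_0)
next
  case False
  then show ?thesis
    using x assms(1,3) embeds_in_adom by fastforce
qed

lemma fo_eval_embedding_formula: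
  fixes ix :: "'v \<Rightarrow> nat" and Fs :: "('r, 'v, 'c) atom list" and zs :: "'v list"
  defines "V \<equiv> \<Union> (vars ` set Fs) \<union> set zs"
  assumes inj: "inj_on ix V" and above: "\<forall>x. length zs < ix x" and w: "w \<in> V"
    and D: "adom db \<subseteq> D" "\<forall>j<length zs. \<sigma> j \<in> D"
    and \<psi>: "\<And>\<tau>. fo_eval D db \<tau> \<psi> \<longleftrightarrow> P (\<tau> (ix w)) (\<tau> (length zs))"
  shows "fo_eval D db \<sigma> (embedding_formula ix Fs zs \<psi>) \<longleftrightarrow>
    (\<exists>\<mu>. embeds db (set Fs) \<mu> \<and> map \<mu> zs = map \<sigma> [0..<length zs] \<and> P (\<mu> w) (\<sigma> (length zs)))"
    (is "?lhs \<longleftrightarrow> ?rhs")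
proof -
  have lhs: "?lhs \<longleftrightarrow> (\<exists>\<tau>. (\<forall>j. j \<notin> ix ` V \<longrightarrow> \<tau> j = \<sigma> j) \<and> (\<forall>i\<in>ix ` V. \<tau> i \<in> D) \<and>
      embeds db (set Fs) (\<tau> \<circ> ix) \<and> map (\<tau> \<circ> ix) zs = map \<tau> [0..<length zs] \<and>
      P (\<tau> (ix w)) (\<tau> (length zs)))"
    unfolding embedding_formula_def fo_eval_exists_list fo_eval_embedding_body \<psi>
    by (simp add: V_def finite_vars)
  have low: "j \<notin> ix ` V" if "j \<le> length zs" for j
    using above that by (metis image_iff not_le)
  have rhs_imp: "\<exists>\<tau>. (\<forall>j. j \<notin> ix ` V \<longrightarrow> \<tau> j = \<sigma> j) \<and> (\<forall>i\<in>ix ` V. \<tau> i \<in> D) \<and>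
      embeds db (set Fs) (\<tau> \<circ> ix) \<and> map (\<tau> \<circ> ix) zs = map \<tau> [0..<length zs] \<and>
      P (\<tau> (ix w)) (\<tau> (length zs))"
    if \<mu>: "embeds db (set Fs) \<mu>" "map \<mu> zs = map \<sigma> [0..<length zs]" "P (\<mu> w) (\<sigma> (length zs))"
    for \<mu>
  proof -
    obtain \<tau> where \<tau>_ix: "\<And>x. x \<in> V \<Longrightarrow> \<tau> (ix x) = \<mu> x"
      and \<tau>_out: "\<And>j. j \<notin> ix ` V \<Longrightarrow> \<tau> j = \<sigma> j"
      using override_on_inj_image[OF inj] by blast
    have "\<forall>i\<in>ix ` V. \<tau> i \<in> D"
      using \<tau>_ix embedding_values_in_domain[OF \<mu>(1,2) D] by (auto simp: V_def)
    moreover have "embeds db (set Fs) (\<tau> \<circ> ix) \<longleftrightarrow> embeds db (set Fs) \<mu>"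
      using \<tau>_ix by (intro embeds_cong) (auto simp: V_def)
    moreover have "map (\<tau> \<circ> ix) zs = map \<tau> [0..<length zs]"
    proof -
      have "map (\<tau> \<circ> ix) zs = map \<mu> zs"
        using \<tau>_ix by (simp add: V_def)
      moreover have "map \<tau> [0..<length zs] = map \<sigma> [0..<length zs]"
        using \<tau>_out low by simp
      ultimately show ?thesis
        using \<mu>(2) by simp
    qed
    moreover have "P (\<tau> (ix w)) (\<tau> (length zs))"
      using \<mu>(3) \<tau>_ix[OF w] \<tau>_out low by simp
    ultimately show ?thesis
      using \<mu>(1) \<tau>_out by (intro exI[of _ \<tau>]) simp
  qed
  show ?thesis
  proof
    assume ?lhs
    then obtain \<tau> where \<tau>: "\<forall>j. j \<notin> ix ` V \<longrightarrow> \<tau> j = \<sigma> j" "embeds db (set Fs) (\<tau> \<circ> ix)"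
      "map (\<tau> \<circ> ix) zs = map \<tau> [0..<length zs]" "P (\<tau> (ix w)) (\<tau> (length zs))"
      using lhs by blast
    moreover have "map \<tau> [0..<length zs] = map \<sigma> [0..<length zs]" "\<tau> (length zs) = \<sigma> (length zs)"
      using \<tau>(1) low by simp_all
    ultimately show ?rhs
      by (intro exI[of _ "\<tau> \<circ> ix"]) simp
  qed (use lhs rhs_imp in blast)
qed

lemma fo_fv_embedding_formula:
  "fo_fv (embedding_formula ix Fs zs \<psi>) \<subseteq>
     {..<length zs} \<union> (fo_fv \<psi> - ix ` (\<Union> (vars ` set Fs) \<union> set zs))"
proof -
  have "fo_fv (atom_formula ix F) \<subseteq> ix ` (\<Union> (vars ` set Fs) \<union> set zs)" if "F \<in> set Fs" for F
    using fo_fv_atom_formula[of ix F] that by blast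
  moreover have "ix (zs ! j) \<in> ix ` (\<Union> (vars ` set Fs) \<union> set zs)" if "j < length zs" for j
    using that by simp
  ultimately show ?thesis
    by (auto simp: embedding_formula_def embedding_body_def fo_fv_exists_list fo_fv_conj_list
        finite_vars)
qed

definition fd_formula :: "('v \<Rightarrow> nat) \<Rightarrow> ('r, 'v, 'c) atom list \<Rightarrow> 'v list \<Rightarrow> 'v \<Rightarrow> ('r, 'c) fo" where
  "fd_formula ix Fs zs w =
     FAnd (embedding_formula ix Fs zs (FEq (FVar (ix w)) (FVar (length zs))))
       (FNot (embedding_formula ix Fs zs (FNot (FEq (FVar (ix w)) (FVar (length zs))))))"

lemma fo_fv_fd_formula:
  assumes "w \<in> \<Union> (vars ` set Fs)"
  shows "fo_fv (fd_formula ix Fs zs w) \<subseteq> {..<Suc (length zs)}"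
  using assms fo_fv_embedding_formula[of ix Fs zs] by (fastforce simp: fd_formula_def)

lemma fo_eval_fd_formula:
  fixes ix :: "'v \<Rightarrow> nat" and Fs :: "('r, 'v, 'c) atom list" and zs :: "'v list"
  assumes inj: "inj_on ix (\<Union> (vars ` set Fs) \<union> set zs)" and above: "\<forall>x. length zs < ix x"
    and w: "w \<in> \<Union> (vars ` set Fs)"
    and D: "adom db \<subseteq> D" "set as \<subseteq> D" and length_as: "length as = Suc (length zs)"
  shows "fo_eval D db (\<lambda>i. as ! i) (fd_formula ix Fs zs w) \<longleftrightarrow>
    determines_value db (set Fs) zs (take (length zs) as) w (as ! length zs)"
proof -
  have "\<forall>j<length zs. as ! j \<in> D"
    using D(2) length_as by (metis less_SucI nth_mem subsetD)
  moreover have "map (\<lambda>i. as ! i) [0..<length zs] = take (length zs) as"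
    using length_as by (intro nth_equalityI) simp_all
  ultimately have embedding: "fo_eval D db (\<lambda>i. as ! i) (embedding_formula ix Fs zs \<psi>) \<longleftrightarrow>
      (\<exists>\<mu>. embeds db (set Fs) \<mu> \<and> map \<mu> zs = take (length zs) as \<and> P (\<mu> w) (as ! length zs))"
    if "\<And>\<tau>. fo_eval D db \<tau> \<psi> \<longleftrightarrow> P (\<tau> (ix w)) (\<tau> (length zs))" for \<psi> P
    using fo_eval_embedding_formula[OF inj above _ D(1) _ that, of "\<lambda>i. as ! i"] w by simp
  have "fo_eval D db (\<lambda>i. as ! i) (embedding_formula ix Fs zs (FEq (FVar (ix w)) (FVar (length zs))))
      \<longleftrightarrow> (\<exists>\<mu>. embeds db (set Fs) \<mu> \<and> map \<mu> zs = take (length zs) as \<and> \<mu> w = as ! length zs)"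
    by (rule embedding) simp
  moreover have "fo_eval D db (\<lambda>i. as ! i)
        (embedding_formula ix Fs zs (FNot (FEq (FVar (ix w)) (FVar (length zs)))))
      \<longleftrightarrow> (\<exists>\<mu>. embeds db (set Fs) \<mu> \<and> map \<mu> zs = take (length zs) as \<and> \<mu> w \<noteq> as ! length zs)"
    by (rule embedding) simp
  ultimately show ?thesis
    unfolding fd_formula_def determines_value_def fo_eval.simps by blast
qed

definition reduction_formula :: "'r schema \<Rightarrow> 'r \<Rightarrow> ('v \<Rightarrow> nat) \<Rightarrow> ('r, 'v, 'c) atom list \<Rightarrow> 'v list
    \<Rightarrow> 'v \<Rightarrow> 'r \<Rightarrow> ('r, 'c) fo" where
  "reduction_formula S N ix Fs zs w R =
     (if R = N then fd_formula ix Fs zs w else FAtom R (map FVar [0..<arity S R]))"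

lemma fo_map_reduction_formula:
  fixes ix :: "'v \<Rightarrow> nat" and Fs :: "('r, 'v, 'c) atom list" and zs :: "'v list"
  assumes db: "is_db S db" and N: "N \<notin> fst ` q" "arity S N = Suc (length zs)"
    and inj: "inj_on ix (\<Union> (vars ` set Fs) \<union> set zs)" and above: "\<forall>x. length zs < ix x"
    and w: "w \<in> \<Union> (vars ` set Fs)"
  shows "fo_map S (insert N (fst ` q)) (reduction_formula S N ix Fs zs w) db =
    fd_extension q (set Fs) zs w N (adom db \<union> fo_consts (fd_formula ix Fs zs w)) db"
    (is "?lhs = fd_extension q (set Fs) zs w N ?D db")
proof (intro set_eqI iffI)
  fix A
  obtain R :: 'r and as :: "'c list" where A: "A = (R, as)"
    by fastforce
  have N_fact: "(N, as) \<in> ?lhs \<longleftrightarrow> (N, as) \<in> fd_extension q (set Fs) zs w N ?D db"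
  proof -
    have "(N, as) \<in> ?lhs \<longleftrightarrow> length as = Suc (length zs) \<and> set as \<subseteq> ?D \<and>
        fo_eval ?D db (\<lambda>i. as ! i) (fd_formula ix Fs zs w)"
      using N(2) by (simp add: fo_map_def reduction_formula_def)
    also have "\<dots> \<longleftrightarrow> length as = Suc (length zs) \<and> set as \<subseteq> ?D \<and>
        determines_value db (set Fs) zs (take (length zs) as) w (as ! length zs)"
      using fo_eval_fd_formula[OF inj above w Un_upper1] by blast
    finally show ?thesis
      using N(1) by (simp add: fd_extension_def determines_value_snoc_iff)
  qed
  have other_fact: "(R, as) \<in> ?lhs \<longleftrightarrow> (R, as) \<in> fd_extension q (set Fs) zs w N ?D db" if "R \<noteq> N"
  proof -
    have "length as = arity S R \<and> set as \<subseteq> adom db" if "(R, as) \<in> db"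
      using that db by (force simp: is_db_def adom_def)
    moreover have "map (fterm_val (\<lambda>i. as ! i) \<circ> FVar) [0..<length as] = as"
      by (simp add: comp_def map_nth)
    ultimately show ?thesis
      using \<open>R \<noteq> N\<close> by (auto simp: fo_map_def reduction_formula_def fd_extension_def)
  qed
  show "A \<in> fd_extension q (set Fs) zs w N ?D db" if "A \<in> ?lhs"
    using that N_fact other_fact A by (cases "R = N") simp_all
  show "A \<in> ?lhs" if "A \<in> fd_extension q (set Fs) zs w N ?D db"
    using that N_fact other_fact A by (cases "R = N") simp_all
qed

lemma fresh_injective_indices:
  assumes "finite V"
  obtains ix :: "'v \<Rightarrow> nat" where "inj_on ix V" and "\<forall>x. k < ix x"
proof -
  obtain f :: "'v \<Rightarrow> nat" and n where "inj_on f V"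
    using finite_imp_inj_to_nat_seg[OF assms] by blast
  then have "inj_on (\<lambda>x. Suc k + f x) V"
    by (simp add: inj_on_def)
  then show thesis
    using that by simp
qed

context internal_fd_proof
begin

theorem fo_reduction_certainty:
  fixes zs :: "'v list" and N :: 'r
  assumes sjf: "sjf_query S q" and zs: "set zs = Z"
    and N: "N \<notin> fst ` q" "arity S N = Suc (length zs)" "keylen S N = length zs" "rmode S N = ModeC"
  shows "fo_reduction S (certainty S q) (certainty S (insert (N, map Var zs @ [Var w]) q))"
proof -
  have "finite (\<Union> (vars ` set Fs) \<union> set zs)"
    by (simp add: finite_vars)
  then obtain ix :: "'v \<Rightarrow> nat"
    where ix: "inj_on ix (\<Union> (vars ` set Fs) \<union> set zs)" "\<forall>x. length zs < ix x"
    by (rule fresh_injective_indices)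
  define \<Phi> where "\<Phi> = reduction_formula S N ix Fs zs w"
  have "finite (insert N (fst ` q))"
    using sjf by (simp add: sjf_query_def)
  moreover have "\<forall>R\<in>insert N (fst ` q). fo_fv (\<Phi> R) \<subseteq> {..<arity S R}"
    using fo_fv_fd_formula[OF w_in_Fs] N(2) by (auto simp: \<Phi>_def reduction_formula_def)
  moreover have "is_db S (fo_map S (insert N (fst ` q)) \<Phi> db) \<and>
      (db \<in> certainty S q \<longleftrightarrow>
       fo_map S (insert N (fst ` q)) \<Phi> db \<in> certainty S (insert (N, map Var zs @ [Var w]) q))"
    if db: "is_db S db" for db
  proof -
    interpret fd_extension_setting S q Z w Fs db zs N "adom db \<union> fo_consts (fd_formula ix Fs zs w)"
      using sjf db zs N
      by unfold_locales (auto simp: sjf_query_def is_db_def finite_adom finite_fo_consts)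
    show ?thesis
      using is_db_db' certainty_db'_iff fo_map_reduction_formula[OF db N(1,2) ix w_in_Fs]
      by (simp add: \<Phi>_def)
  qed
  ultimately show ?thesis
    unfolding fo_reduction_def by blast
qed

end

theorem lemma28:
  fixes S :: "'r schema" and q :: "('r, 'v, 'c) atom set"
    and Z :: "'v set" and w :: 'v and zs :: "'v list" and N :: 'r
  assumes "infinite (UNIV :: 'c set)"
    and "wf_schema S"
    and "sjf_query S q"
    and "internal_fd S q Z w"
    and "distinct zs" and "set zs = Z"
    and "N \<notin> fst ` q"
    and "arity S N = length zs + 1" and "keylen S N = length zs" and "rmode S N = ModeC"
  shows "fo_reduction S (certainty S q) (certainty S (insert (N, map Var zs @ [Var w]) q))
     \<and> (\<not> has_strong_cycle S q \<longrightarrow> \<not> has_strong_cycle S (insert (N, map Var zs @ [Var w]) q))"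
proof -
  obtain Fs where "internal_fd_proof S q Z w Fs"
    using assms(4) by (auto simp: internal_fd_def internal_fd_proof_def)
  then interpret internal_fd_proof S q Z w Fs .
  let ?N = "(N, map Var zs @ [Var w])"
  have "?N \<notin> q"
    using assms(7) by force
  moreover have "vars ?N \<subseteq> insert w Z"
    using assms(6) by (auto simp: vars_def)
  ultimately have "\<not> has_strong_cycle S q \<longrightarrow> \<not> has_strong_cycle S (insert ?N q)"
    using strong_cycle_of_extension assms(10) by auto
  moreover have "fo_reduction S (certainty S q) (certainty S (insert ?N q))"
    using fo_reduction_certainty[OF assms(3,6,7)] assms(8-10) by simp
  ultimately show ?thesis
    by blast
qed

end
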